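(* Let $\mathcal{G}=(V,\sigma,E)$ be a connected dual equivalence graph of type $(n,N)$ with $n<N$, and let $\phi$ be an isomorphism from the $(n,n)$-restriction of $\mathcal{G}$ to $\mathcal{G}_\lambda$ for some partition $\lambda$ of $n$. Then there exist a partition $\rho\supseteq\lambda$ with $|\rho|=N$ and a filling $A$ of $\rho/\lambda$ with entries $n+1,\dots,N$ (with $\mathrm{ASYT}(\lambda,A)\ne\emptyset$) such that the same map $\phi$ is an isomorphism from $\mathcal{G}$ to $\mathcal{G}_{\lambda,A}$. Moreover, the position of the cell of $A$ containing $n+1$ is uniquely determined.
   Context: Tableaux conventions. Partitions, French diagrams (cells $(i,j)$ with $1\le i\le\lambda_j$, rows from the bottom), skew diagrams $\rho/\lambda$ = set difference. $\mathrm{SYT}(\rho)$: bijections from cells to $[N]$ increasing along rows and up columns. Content of $(i,j)$ is $i-j$; content reading word reads entries by increasing content, each diagonal southwest to northeast; descent signature $\sigma(T)\in\{\pm1\}^{N-1}$, $\sigma(T)_i=+1$ iff $i$ is left of $i+1$ in the reading word. $d_i$ on words: identity if $i$ lies positionally between $i-1,i+1$, otherwise swap $i$ with the farther of $i\pm1$; on tableaux, swap the corresponding entries. A signed, colored graph of type $(n,N)$ is $(V,\sigma,E)$: finite $V$, $\sigma:V\to\{\pm1\}^{N-1}$, for $1<i<n$ sets $E_i$ of $2$-element subsets of $V$. For $m\le n$, $M\le N$, its $(m,M)$-restriction has vertex set $V$, signatures truncated to the first $M-1$ coordinates, and edges $E_2,\dots,E_{m-1}$. It is a dual equivalence graph of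 type $(n,N)$ if $n\le N$ and (indices only where defined): (ax1) for $w\in V$, $1<i<n$: $\sigma(w)_{i-1}=-\sigma(w)_i$ iff some $x$ has $\{w,x\}\in E_i$, and such $x$ is unique; (ax2) if $\{w,x\}\in E_i$: $\sigma(w)_j=-\sigma(x)_j$ for $j=i-1,i$ and $\sigma(w)_h=\sigma(x)_h$ for $h<i-2$, $h>i+1$; (ax3) if $\{w,x\}\in E_i$ and $\sigma(w)_{i-2}=-\sigma(x)_{i-2}$ then $\sigma(w)_{i-2}=-\sigma(w)_{i-1}$; if $\sigma(w)_{i+1}=-\sigma(x)_{i+1}$ then $\sigma(w)_{i+1}=-\sigma(w)_i$; (ax4) each component of $(V,E_{i-1}\cup E_i)$ is a single vertex, a path $x,y,z$ with only edges $\{x,y\}\in E_{i-1}$, $\{y,z\}\in E_i$, or two vertices joined by both an $E_{i-1}$- and an $E_i$-edge; each component of $(V,E_{i-2}\cup E_{i-1}\cup E_i)$ is: (a) a single vertex; (b) a path $p,q,r,s$ with only edges $\{p,q\}\in E_{i-2}$, $\{q,r\}\in E_{i-1}$, $\{r,s\}\in E_i$; (c) vertices $a,b,c,d,e$ with only edges $\{a,b\}\in E_{i-2}\cap E_{i-1}$, $\{b,c\}\in E_i$, $\{c,d\}\in E_{i-2}$, $\{d,e\}\in E_{i-1}\cap E_i$; (d) vertices $u,v,w,x,y,z$ with only edges $\{u,v\}\in E_{i-1}$, $\{v,w\}\in E_{i-2}$, $\{v,x\}\in E_i$, $\{w,y\}\in E_i$, $\{x,y\}\in E_{i-2}$, $\{y,z\}\in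 E_{i-1}$; (ax5) if $\{w,x\}\in E_i$, $\{x,y\}\in E_j$, $|i-j|\ge3$, then some $v$ has $\{w,v\}\in E_j$, $\{v,y\}\in E_i$; (ax6) for each $1<i<n$, any two vertices of a component of $(V,E_2\cup\dots\cup E_i)$ are joined by a path in it with at most one $E_i$-edge. $\mathcal{G}_\lambda$: type $(n,n)$, vertices $\mathrm{SYT}(\lambda)$, descent signature, $E_i=\{\{T,d_i(T)\}:d_i(T)\neq T\}$. Augmented: for $\lambda\subseteq\rho$, $|\lambda|=n$, $|\rho|=N$, $A$ a filling of $\rho/\lambda$ by $n+1,\dots,N$, $\mathrm{ASYT}(\lambda,A)$ is the set of $T\in\mathrm{SYT}(\rho)$ restricting to $A$ on $\rho/\lambda$, and $\mathcal{G}_{\lambda,A}$ is the type $(n,N)$ graph on $\mathrm{ASYT}(\lambda,A)$ with descent signatures in $\{\pm1\}^{N-1}$ and $E_i=\{\{T,d_i(T)\}:d_i(T)\ne T\}$, $1<i<n$. Restricting a tableau in $\mathrm{ASYT}(\lambda,A)$ to $\lambda$ identifies $\mathrm{ASYT}(\lambda,A)$ with $\mathrm{SYT}(\lambda)$, through which $\phi$ is regarded as a map to $\mathrm{ASYT}(\lambda,A)$. An isomorphism is a vertex bijection preserving signatures and mapping $i$-edges to $i$-edges. *)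

theory Defs
  imports Main
begin

text \<open>A partition is a weakly decreasing list of positive parts; lam!(j-1) is the
length of row j (rows counted from the bottom). Cells are pairs (i,j) with
1 <= j <= length lam and 1 <= i <= lam!(j-1): i is the column, j is the row.\<close>

definition is_partition :: "nat list \<Rightarrow> bool" where
  "is_partition lam \<longleftrightarrow> sorted_wrt (\<ge>) lam \<and> (\<forall>x\<in>set lam. 0 < x)"

definition cells :: "nat list \<Rightarrow> (nat \<times> nat) set" where
  "cells lam = {(i,j). 1 \<le> j \<and> j \<le> length lam \<and> 1 \<le> i \<and> i \<le> lam ! (j - 1)}"

type_synonym tableau = "nat \<times> nat \<Rightarrow> nat"

text \<open>Standard Young tableaux of shape rho: bijections cells -> {1..|rho|}, increasing
along rows and up columns; the value 0 is used outside the diagram so that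
tableaux are determined by their entries.\<close>

definition SYT :: "nat list \<Rightarrow> tableau set" where
  "SYT rho = {T. (\<forall>c. c \<notin> cells rho \<longrightarrow> T c = 0)
      \<and> bij_betw T (cells rho) {1..sum_list rho}
      \<and> (\<forall>i j. (i,j) \<in> cells rho \<and> (Suc i, j) \<in> cells rho \<longrightarrow> T (i,j) < T (Suc i, j))
      \<and> (\<forall>i j. (i,j) \<in> cells rho \<and> (i, Suc j) \<in> cells rho \<longrightarrow> T (i,j) < T (i, Suc j))}"

definition cell_of :: "tableau \<Rightarrow> nat \<Rightarrow> nat \<times> nat" where
  "cell_of T k = (THE c. T c = k)"

text \<open>Order of cells in the content reading word: increasing content i - j,
and along a diagonal from southwest to northeast (increasing row j).\<close>

definition rd_less :: "nat \<times> nat \<Rightarrow> nat \<times> nat \<Rightarrow> bool" where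
  "rd_less c c' \<longleftrightarrow>
     (int (fst c) - int (snd c) < int (fst c') - int (snd c'))
     \<or> (int (fst c) - int (snd c) = int (fst c') - int (snd c') \<and> snd c < snd c')"

definition rlt :: "tableau \<Rightarrow> nat \<Rightarrow> nat \<Rightarrow> bool" where
  "rlt T a b \<longleftrightarrow> rd_less (cell_of T a) (cell_of T b)"

definition desc_sig :: "tableau \<Rightarrow> nat \<Rightarrow> int" where
  "desc_sig T k = (if rlt T k (Suc k) then 1 else -1)"

definition swap_entries :: "tableau \<Rightarrow> nat \<Rightarrow> nat \<Rightarrow> tableau" where
  "swap_entries T a b = (\<lambda>c. if T c = a then b else if T c = b then a else T c)"

text \<open>d_i: identity if i lies between i-1 and i+1 in the reading word; otherwise
swap i with the one of i-1, i+1 that is farther from i.\<close>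
definition dual_d :: "nat \<Rightarrow> tableau \<Rightarrow> tableau" where
  "dual_d i T =
    (if (rlt T (i-1) i \<and> rlt T i (Suc i)) \<or> (rlt T (Suc i) i \<and> rlt T i (i-1)) then T
     else if rlt T i (i-1) \<and> rlt T i (Suc i) then
       (if rlt T (i-1) (Suc i) then swap_entries T i (Suc i) else swap_entries T i (i-1))
     else
       (if rlt T (i-1) (Suc i) then swap_entries T i (i-1) else swap_entries T i (Suc i)))"

definition tab_edges :: "nat \<Rightarrow> tableau set \<Rightarrow> nat \<Rightarrow> tableau set set" where
  "tab_edges n S i = (if 1 < i \<and> i < n then {{T, dual_d i T} | T. T \<in> S \<and> dual_d i T \<noteq> T} else {})"

definition is_filling :: "nat list \<Rightarrow> nat list \<Rightarrow> nat \<Rightarrow> nat \<Rightarrow> tableau \<Rightarrow> bool" where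
  "is_filling lam rho n N A \<longleftrightarrow> (\<forall>c. c \<notin> cells rho - cells lam \<longrightarrow> A c = 0)
      \<and> bij_betw A (cells rho - cells lam) {Suc n..N}"

definition ASYT :: "nat list \<Rightarrow> nat list \<Rightarrow> tableau \<Rightarrow> tableau set" where
  "ASYT lam rho A = {T \<in> SYT rho. \<forall>c \<in> cells rho - cells lam. T c = A c}"

definition augment :: "nat list \<Rightarrow> tableau \<Rightarrow> tableau \<Rightarrow> tableau" where
  "augment lam A P = (\<lambda>c. if c \<in> cells lam then P c else A c)"

text \<open>A graph is (V, sigma, E); sigma v k is meaningful for 1 <= k < N, E i for 1 < i < n.\<close>

definition signed_colored_graph ::
  "nat \<Rightarrow> nat \<Rightarrow> 'v set \<Rightarrow> ('v \<Rightarrow> nat \<Rightarrow> int) \<Rightarrow> (nat \<Rightarrow> 'v set set) \<Rightarrow> bool" where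
  "signed_colored_graph n N V \<sigma> E \<longleftrightarrow> finite V
     \<and> (\<forall>v\<in>V. \<forall>k. 1 \<le> k \<and> k < N \<longrightarrow> \<sigma> v k = 1 \<or> \<sigma> v k = -1)
     \<and> (\<forall>i. 1 < i \<and> i < n \<longrightarrow> (\<forall>e\<in>E i. \<exists>x\<in>V. \<exists>y\<in>V. x \<noteq> y \<and> e = {x,y}))"

definition restr_sig :: "nat \<Rightarrow> ('v \<Rightarrow> nat \<Rightarrow> int) \<Rightarrow> 'v \<Rightarrow> nat \<Rightarrow> int" where
  "restr_sig M \<sigma> = (\<lambda>v k. if 1 \<le> k \<and> k < M then \<sigma> v k else 0)"

definition restr_edges :: "nat \<Rightarrow> (nat \<Rightarrow> 'v set set) \<Rightarrow> nat \<Rightarrow> 'v set set" where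
  "restr_edges m E = (\<lambda>i. if 1 < i \<and> i < m then E i else {})"

definition edge_rel :: "'v set set \<Rightarrow> ('v \<times> 'v) set" where
  "edge_rel F = {(x,y). {x,y} \<in> F}"

definition component :: "'v set \<Rightarrow> 'v set set \<Rightarrow> 'v \<Rightarrow> 'v set" where
  "component V F v = {w \<in> V. (v,w) \<in> (edge_rel F)\<^sup>*}"

definition edges_in :: "'v set set \<Rightarrow> 'v set \<Rightarrow> 'v set set" where
  "edges_in F C = {e \<in> F. e \<subseteq> C}"

definition all_edges :: "nat \<Rightarrow> (nat \<Rightarrow> 'v set set) \<Rightarrow> 'v set set" where
  "all_edges n E = \<Union>{E j | j. 1 < j \<and> j < n}"

definition connected_graph :: "nat \<Rightarrow> 'v set \<Rightarrow> (nat \<Rightarrow> 'v set set) \<Rightarrow> bool" where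
  "connected_graph n V E \<longleftrightarrow> (\<forall>x\<in>V. \<forall>y\<in>V. (x,y) \<in> (edge_rel (all_edges n E))\<^sup>*)"

definition deg_ax1 where
  "deg_ax1 n N V \<sigma> E \<longleftrightarrow> (\<forall>w\<in>V. \<forall>i. 1 < i \<and> i < n \<longrightarrow>
     ((\<sigma> w (i-1) = - \<sigma> w i) \<longleftrightarrow> (\<exists>x. {w,x} \<in> E i))
     \<and> (\<forall>x y. {w,x} \<in> E i \<and> {w,y} \<in> E i \<longrightarrow> x = y))"

definition deg_ax2 where
  "deg_ax2 n N V \<sigma> E \<longleftrightarrow> (\<forall>i w x. 1 < i \<and> i < n \<and> {w,x} \<in> E i \<longrightarrow>
     \<sigma> w (i-1) = - \<sigma> x (i-1) \<and> \<sigma> w i = - \<sigma> x i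
     \<and> (\<forall>h. 1 \<le> h \<and> h < N \<and> (h + 2 < i \<or> h > Suc i) \<longrightarrow> \<sigma> w h = \<sigma> x h))"

definition deg_ax3 where
  "deg_ax3 n N V \<sigma> E \<longleftrightarrow> (\<forall>i w x. 1 < i \<and> i < n \<and> {w,x} \<in> E i \<longrightarrow>
     (2 < i \<and> \<sigma> w (i-2) = - \<sigma> x (i-2) \<longrightarrow> \<sigma> w (i-2) = - \<sigma> w (i-1))
     \<and> (Suc i < N \<and> \<sigma> w (Suc i) = - \<sigma> x (Suc i) \<longrightarrow> \<sigma> w (Suc i) = - \<sigma> w i))"

definition deg_ax4 where
  "deg_ax4 n N V \<sigma> E \<longleftrightarrow>
   (\<forall>i. 2 < i \<and> i < n \<longrightarrow> (\<forall>v\<in>V. let C = component V (E (i-1) \<union> E i) v in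
       C = {v}
     \<or> (\<exists>x y z. distinct [x,y,z] \<and> C = {x,y,z}
          \<and> edges_in (E (i-1)) C = {{x,y}} \<and> edges_in (E i) C = {{y,z}})
     \<or> (\<exists>x y. x \<noteq> y \<and> C = {x,y}
          \<and> edges_in (E (i-1)) C = {{x,y}} \<and> edges_in (E i) C = {{x,y}})))
   \<and>
   (\<forall>i. 3 < i \<and> i < n \<longrightarrow> (\<forall>v0\<in>V. let C = component V (E (i-2) \<union> E (i-1) \<union> E i) v0 in
       C = {v0}
     \<or> (\<exists>p q r s. distinct [p,q,r,s] \<and> C = {p,q,r,s}
          \<and> edges_in (E (i-2)) C = {{p,q}} \<and> edges_in (E (i-1)) C = {{q,r}}
          \<and> edges_in (E i) C = {{r,s}})
     \<or> (\<exists>a b c d e. distinct [a,b,c,d,e] \<and> C = {a,b,c,d,e}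
          \<and> edges_in (E (i-2)) C = {{a,b},{c,d}} \<and> edges_in (E (i-1)) C = {{a,b},{d,e}}
          \<and> edges_in (E i) C = {{b,c},{d,e}})
     \<or> (\<exists>u v w x y z. distinct [u,v,w,x,y,z] \<and> C = {u,v,w,x,y,z}
          \<and> edges_in (E (i-1)) C = {{u,v},{y,z}} \<and> edges_in (E (i-2)) C = {{v,w},{x,y}}
          \<and> edges_in (E i) C = {{v,x},{w,y}})))"

definition deg_ax5 where
  "deg_ax5 n N V \<sigma> E \<longleftrightarrow> (\<forall>i j w x y. 1 < i \<and> i < n \<and> 1 < j \<and> j < n
     \<and> {w,x} \<in> E i \<and> {x,y} \<in> E j \<and> (i + 3 \<le> j \<or> j + 3 \<le> i)
     \<longrightarrow> (\<exists>v. {w,v} \<in> E j \<and> {v,y} \<in> E i))"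

definition deg_ax6 where
  "deg_ax6 n N V \<sigma> E \<longleftrightarrow> (\<forall>i. 1 < i \<and> i < n \<longrightarrow>
     (\<forall>x\<in>V. \<forall>y \<in> component V (\<Union>{E j | j. 1 < j \<and> j \<le> i}) x.
        (x,y) \<in> (edge_rel (\<Union>{E j | j. 1 < j \<and> j < i}))\<^sup>* O (edge_rel (E i))\<^sup>=
                 O (edge_rel (\<Union>{E j | j. 1 < j \<and> j < i}))\<^sup>*))"

definition dual_equivalence_graph ::
  "nat \<Rightarrow> nat \<Rightarrow> 'v set \<Rightarrow> ('v \<Rightarrow> nat \<Rightarrow> int) \<Rightarrow> (nat \<Rightarrow> 'v set set) \<Rightarrow> bool" where
  "dual_equivalence_graph n N V \<sigma> E \<longleftrightarrow> n \<le> N \<and> signed_colored_graph n N V \<sigma> E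
     \<and> deg_ax1 n N V \<sigma> E \<and> deg_ax2 n N V \<sigma> E \<and> deg_ax3 n N V \<sigma> E
     \<and> deg_ax4 n N V \<sigma> E \<and> deg_ax5 n N V \<sigma> E \<and> deg_ax6 n N V \<sigma> E"

definition graph_iso ::
  "nat \<Rightarrow> nat \<Rightarrow> 'a set \<Rightarrow> ('a \<Rightarrow> nat \<Rightarrow> int) \<Rightarrow> (nat \<Rightarrow> 'a set set)
   \<Rightarrow> 'b set \<Rightarrow> ('b \<Rightarrow> nat \<Rightarrow> int) \<Rightarrow> (nat \<Rightarrow> 'b set set) \<Rightarrow> ('a \<Rightarrow> 'b) \<Rightarrow> bool" where
  "graph_iso n N V \<sigma> E V' \<sigma>' E' f \<longleftrightarrow> bij_betw f V V'
     \<and> (\<forall>v\<in>V. \<forall>k. 1 \<le> k \<and> k < N \<longrightarrow> \<sigma>' (f v) k = \<sigma> v k)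
     \<and> (\<forall>i. 1 < i \<and> i < n \<longrightarrow> image (image f) (E i) = E' i)"

end

(*
  Positions above n of the signature are constant on the connected graph, since every edge has
  a colour i < n and axiom 2 leaves position h > i + 1 unchanged. Position n depends only on the
  cell holding n: two tableaux with n in the same corner are joined by moves d_i with i < n - 1.
  Axiom 3 on the edge d_{n-1} that exchanges two corners shows that corners with an ascent at n
  all precede, in content, corners with a descent, so some addable cell a separates them in the
  reading order. Putting n + 1 into a and each later entry at the end of the bottom row or on top
  of the first column, as the constant signature demands, gives the filling A. Conversely the cell
  of n + 1 in any such filling is addable and separates the corners in the same way, and two
  distinct addable cells are always separated by a removable corner.
*)

theory Submission
  imports Defs
begin

section \<open>Ferrers diagrams and their corners\<close>

definition content :: "nat \<times> nat \<Rightarrow> int" where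
  "content c = int (fst c) - int (snd c)"

lemma rd_less_iff_content:
  "rd_less c c' \<longleftrightarrow> content c < content c' \<or> (content c = content c' \<and> snd c < snd c')"
  unfolding rd_less_def content_def by auto

lemma rd_less_asym: "rd_less c c' \<Longrightarrow> \<not> rd_less c' c"
  unfolding rd_less_iff_content by auto

lemma rd_less_trans: "rd_less a b \<Longrightarrow> rd_less b c \<Longrightarrow> rd_less a c"
  unfolding rd_less_iff_content by auto

lemma rd_less_if_content_less: "content c < content c' \<Longrightarrow> rd_less c c'"
  unfolding rd_less_iff_content by auto

lemma content_le_if_rd_less: "rd_less c c' \<Longrightarrow> content c \<le> content c'"
  unfolding rd_less_iff_content by auto

definition ferrers :: "(nat \<times> nat) set \<Rightarrow> bool" where
  "ferrers D \<longleftrightarrow> finite D \<and> (\<forall>x y. (x,y) \<in> D \<longrightarrow> 1 \<le> x \<and> 1 \<le> y)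
     \<and> (\<forall>x y x' y'. (x,y) \<in> D \<and> 1 \<le> x' \<and> 1 \<le> y' \<and> x' \<le> x \<and> y' \<le> y \<longrightarrow> (x',y') \<in> D)"

definition removable :: "(nat \<times> nat) set \<Rightarrow> nat \<times> nat \<Rightarrow> bool" where
  "removable D r \<longleftrightarrow> r \<in> D \<and> (Suc (fst r), snd r) \<notin> D \<and> (fst r, Suc (snd r)) \<notin> D"

definition addable :: "(nat \<times> nat) set \<Rightarrow> nat \<times> nat \<Rightarrow> bool" where
  "addable D c \<longleftrightarrow> c \<notin> D \<and> 1 \<le> fst c \<and> 1 \<le> snd c
     \<and> (2 \<le> fst c \<longrightarrow> (fst c - 1, snd c) \<in> D) \<and> (2 \<le> snd c \<longrightarrow> (fst c, snd c - 1) \<in> D)"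

lemma ferrersD:
  assumes "ferrers D" "(x,y) \<in> D" "1 \<le> x'" "1 \<le> y'" "x' \<le> x" "y' \<le> y"
  shows "(x',y') \<in> D"
  using assms unfolding ferrers_def by blast

lemma ferrers_pos: "ferrers D \<Longrightarrow> (x,y) \<in> D \<Longrightarrow> 1 \<le> x \<and> 1 \<le> y"
  unfolding ferrers_def by blast

lemma ferrers_finite: "ferrers D \<Longrightarrow> finite D"
  unfolding ferrers_def by blast

lemma ferrers_Diff_removable:
  assumes F: "ferrers D" and r: "removable D r" shows "ferrers (D - {r})"
proof -
  have "(x',y') \<noteq> r"
    if "(x,y) \<in> D - {r}" "1 \<le> x'" "1 \<le> y'" "x' \<le> x" "y' \<le> y" for x y x' y'
  proof
    assume r_eq: "(x',y') = r"
    have "x' < x \<or> y' < y" using that r_eq by auto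
    then have "(Suc x', y') \<in> D \<or> (x', Suc y') \<in> D"
      using that ferrersD[OF F, of x y "Suc x'" y'] ferrersD[OF F, of x y x' "Suc y'"] by auto
    then show False using r r_eq by (auto simp: removable_def)
  qed
  with F show ?thesis unfolding ferrers_def by blast
qed

lemma ferrers_insert_addable:
  assumes F: "ferrers D" and a: "addable D c" shows "ferrers (insert c D)"
proof -
  obtain a b where c: "c = (a,b)" by fastforce
  have "(x',y') \<in> D"
    if "(x,y) = c" "1 \<le> x'" "1 \<le> y'" "x' \<le> x" "y' \<le> y" "(x',y') \<noteq> c" for x y x' y'
  proof (cases "x' < a")
    case True
    then show ?thesis
      using that a c ferrersD[OF F, of "a - 1" b x' y'] by (auto simp: addable_def)
  next
    case False
    then have "y' < b" using that c by auto
    then show ?thesis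
      using that a c ferrersD[OF F, of a "b - 1" x' y'] by (auto simp: addable_def)
  qed
  then have "(x',y') \<in> insert c D"
    if "(x,y) \<in> insert c D" "1 \<le> x'" "1 \<le> y'" "x' \<le> x" "y' \<le> y" for x y x' y'
    using that ferrersD[OF F, of x y x' y'] by blast
  moreover have "1 \<le> x \<and> 1 \<le> y" if "(x,y) \<in> insert c D" for x y
    using that ferrers_pos[OF F, of x y] a c by (auto simp: addable_def)
  ultimately show ?thesis using ferrers_finite[OF F] unfolding ferrers_def by blast
qed

lemma addable_Diff_removable:
  assumes F: "ferrers D" and r: "removable D r" shows "addable (D - {r}) r"
proof -
  obtain a b where rr: "r = (a,b)" by fastforce
  have rD: "(a,b) \<in> D" using r rr by (simp add: removable_def)
  have ab: "1 \<le> a" "1 \<le> b" using ferrers_pos[OF F rD] by auto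
  have "(a-1,b) \<in> D" if "2 \<le> a" using that ferrersD[OF F rD, of "a-1" b] ab by simp
  moreover have "(a,b-1) \<in> D" if "2 \<le> b" using that ferrersD[OF F rD, of a "b-1"] ab by simp
  ultimately show ?thesis using rr ab by (auto simp: addable_def)
qed

lemma removable_subset: "removable D r \<Longrightarrow> r \<in> D' \<Longrightarrow> D' \<subseteq> D \<Longrightarrow> removable D' r"
  unfolding removable_def by blast

lemma finite_obtain_arg_max:
  fixes f :: "'a \<Rightarrow> 'b::linorder"
  assumes "finite S" "S \<noteq> {}"
  obtains x where "x \<in> S" "\<And>y. y \<in> S \<Longrightarrow> f y \<le> f x"
proof -
  have "Max (f ` S) \<in> f ` S" using assms by simp
  then obtain x where "x \<in> S" "f x = Max (f ` S)" by force
  with assms show ?thesis using that by simp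
qed

lemma ex_removable:
  assumes "ferrers D" "D \<noteq> {}" shows "\<exists>r. removable D r"
proof -
  have fin: "finite D" using assms ferrers_finite by blast
  obtain r where r: "r \<in> D" "\<And>c. c \<in> D \<Longrightarrow> fst c + snd c \<le> fst r + snd r"
    using finite_obtain_arg_max[OF fin assms(2), of "\<lambda>c. fst c + snd c"] by blast
  then have "(Suc (fst r), snd r) \<notin> D" "(fst r, Suc (snd r)) \<notin> D" by fastforce+
  with r show ?thesis unfolding removable_def by blast
qed

lemma cells_snoc: "cells (xs @ [x]) = cells xs \<union> {(i, Suc (length xs)) | i. 1 \<le> i \<and> i \<le> x}"
  unfolding cells_def by (auto simp: nth_append le_Suc_eq)

lemma finite_cells_card_cells: "finite (cells lam) \<and> card (cells lam) = sum_list lam"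
proof (induction lam rule: rev_induct)
  case Nil
  have "cells [] = {}" by (auto simp: cells_def)
  then show ?case by simp
next
  case (snoc x xs)
  have row: "{(i, Suc (length xs)) | i. 1 \<le> i \<and> i \<le> x} = (\<lambda>i. (i, Suc (length xs))) ` {1..x}"
    by auto
  have "cells xs \<inter> (\<lambda>i. (i, Suc (length xs))) ` {1..x} = {}"
    by (auto simp: cells_def)
  moreover have "card ((\<lambda>i. (i, Suc (length xs))) ` {1..x}) = x"
    by (subst card_image) (auto simp: inj_on_def)
  ultimately show ?case using snoc unfolding cells_snoc row by (simp add: card_Un_disjoint)
qed

lemma partition_nth_mono:
  assumes "is_partition lam" "i \<le> j" "j < length lam"
  shows "lam ! j \<le> lam ! i"
  using assms by (cases "i = j") (auto simp: is_partition_def sorted_wrt_iff_nth_less)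

lemma partition_nth_pos: "is_partition lam \<Longrightarrow> j < length lam \<Longrightarrow> 0 < lam ! j"
  unfolding is_partition_def by (auto simp: in_set_conv_nth)

lemma mem_cells: "(i,j) \<in> cells lam \<longleftrightarrow> 1 \<le> j \<and> j \<le> length lam \<and> 1 \<le> i \<and> i \<le> lam ! (j - 1)"
  unfolding cells_def by simp

lemma ferrers_cells:
  assumes "is_partition lam" shows "ferrers (cells lam)"
proof -
  have "lam ! (j - 1) \<le> lam ! (j' - 1)" if "1 \<le> j'" "j' \<le> j" "j \<le> length lam" for j j'
    using partition_nth_mono[OF assms, of "j' - 1" "j - 1"] that by simp
  then show ?thesis
    unfolding ferrers_def using finite_cells_card_cells[of lam]
    by (auto simp: cells_def) (meson le_trans)
qed

lemma addable_cells_in_row: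
  assumes P: "is_partition lam" and a: "addable (cells lam) (x,y)" and y: "y \<le> length lam"
  shows "x = Suc (lam ! (y - 1))" "2 \<le> y \<Longrightarrow> x \<le> lam ! (y - 2)"
proof -
  have a': "(x,y) \<notin> cells lam" "1 \<le> x" "1 \<le> y" "2 \<le> x \<Longrightarrow> (x - 1, y) \<in> cells lam"
    "2 \<le> y \<Longrightarrow> (x, y - 1) \<in> cells lam"
    using a by (auto simp: addable_def)
  have pos: "0 < lam ! (y - 1)" using partition_nth_pos[OF P] y a' by simp
  have "2 \<le> x"
  proof (rule ccontr)
    assume "\<not> 2 \<le> x"
    then have "(x,y) \<in> cells lam" using y a' pos by (simp add: mem_cells)
    then show False using a' by simp
  qed
  then have "x - 1 \<le> lam ! (y - 1)" using a'(4) by (simp add: mem_cells)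
  moreover have "\<not> x \<le> lam ! (y - 1)" using a' y by (simp add: mem_cells)
  ultimately show "x = Suc (lam ! (y - 1))" by simp
  show "x \<le> lam ! (y - 2)" if "2 \<le> y"
    using a'(5)[OF that] that by (simp add: mem_cells numeral_2_eq_2)
qed

lemma partition_extend_row:
  assumes P: "is_partition lam" and a: "addable (cells lam) (x,y)" and y: "y \<le> length lam"
  defines "rho \<equiv> lam[y-1 := x]"
  shows "is_partition rho \<and> cells rho = insert (x,y) (cells lam)"
proof -
  have a': "(x,y) \<notin> cells lam" "1 \<le> y" using a by (auto simp: addable_def)
  note xe = addable_cells_in_row(1)[OF P a y] and above = addable_cells_in_row(2)[OF P a y]
  have len: "length rho = length lam" using rho_def by simp
  have nth: "rho ! j = (if j = y - 1 then x else lam ! j)" if "j < length lam" for j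
    using that y a' unfolding rho_def by auto
  have sorted: "rho ! j \<le> rho ! i" if "i < j" "j < length rho" for i j
  proof -
    have ij: "lam ! j \<le> lam ! i" using partition_nth_mono[OF P, of i j] that len by simp
    show ?thesis
    proof (cases "j = y - 1")
      case True
      then have "i \<le> y - 2" using that by simp
      then have "lam ! (y-2) \<le> lam ! i" using partition_nth_mono[OF P, of i "y-2"] that len True by simp
      moreover have "2 \<le> y" using True that by simp
      ultimately show ?thesis using nth that len True above by auto
    next
      case False
      then show ?thesis using nth that len ij xe partition_nth_mono[OF P, of "y-1" j] y a'
        by (cases "i = y - 1") auto
    qed
  qed
  have "is_partition rho"
  proof -
    have "sorted_wrt (\<ge>) rho" unfolding sorted_wrt_iff_nth_less using sorted by auto
    moreover have "\<forall>v\<in>set rho. 0 < v"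
    proof
      fix v assume "v \<in> set rho"
      then obtain j where "j < length rho" "rho ! j = v" by (auto simp: in_set_conv_nth)
      then show "0 < v" using nth partition_nth_pos[OF P] len xe by (cases "j = y - 1") auto
    qed
    ultimately show ?thesis by (simp add: is_partition_def)
  qed
  moreover have "cells rho = insert (x,y) (cells lam)"
  proof (rule set_eqI)
    fix c :: "nat \<times> nat"
    obtain i j where c: "c = (i,j)" by fastforce
    show "c \<in> cells rho \<longleftrightarrow> c \<in> insert (x,y) (cells lam)"
    proof (cases "1 \<le> j \<and> j \<le> length lam")
      case True
      then have "rho ! (j-1) = (if j = y then x else lam ! (j-1))" using nth[of "j-1"] a' by auto
      then show ?thesis using c True xe len by (auto simp: mem_cells)
    next
      case False
      then show ?thesis using c len y a' by (auto simp: mem_cells)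
    qed
  qed
  ultimately show ?thesis by blast
qed

lemma partition_add_row:
  assumes P: "is_partition lam" and a: "addable (cells lam) (x,y)" and y: "\<not> y \<le> length lam"
  shows "is_partition (lam @ [1]) \<and> cells (lam @ [1]) = insert (x,y) (cells lam)"
proof -
  have "y = Suc (length lam)"
    using a y by (cases "2 \<le> y") (auto simp: addable_def mem_cells)
  moreover have "x = 1"
    using a calculation by (cases "2 \<le> x") (auto simp: addable_def mem_cells)
  ultimately show ?thesis
    using P unfolding is_partition_def cells_snoc by (auto simp: sorted_wrt_append)
qed

lemma partition_insert_addable:
  assumes "is_partition lam" "addable (cells lam) (x,y)"
  shows "\<exists>rho. is_partition rho \<and> cells rho = insert (x,y) (cells lam)"
  using partition_extend_row[OF assms] partition_add_row[OF assms] by blast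

lemma ferrers_eq_cells_partition:
  assumes "ferrers D" shows "\<exists>rho. is_partition rho \<and> cells rho = D"
  using assms
proof (induction "card D" arbitrary: D)
  case 0
  then have "D = {}" using ferrers_finite by auto
  moreover have "cells [] = {}" by (simp add: cells_def)
  moreover have "is_partition []" by (simp add: is_partition_def)
  ultimately show ?case by blast
next
  case (Suc k)
  then have "D \<noteq> {}" by auto
  then obtain r where r: "removable D r" using ex_removable Suc.prems by blast
  have F': "ferrers (D - {r})" using ferrers_Diff_removable[OF Suc.prems r] .
  have rD: "r \<in> D" using r by (simp add: removable_def)
  have "card (D - {r}) = k" using Suc.hyps(2) rD by simp
  then obtain lam where lam: "is_partition lam" "cells lam = D - {r}" using Suc.hyps(1)[OF _ F'] by auto
  have ad: "addable (cells lam) r" using addable_Diff_removable[OF Suc.prems r] lam by simp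
  obtain x y where xy: "r = (x,y)" by fastforce
  obtain rho where "is_partition rho" "cells rho = insert r (cells lam)"
    using partition_insert_addable[OF lam(1)] ad xy by blast
  then show ?case using lam rD by (intro exI[of _ rho]) auto
qed

definition syt :: "(nat \<times> nat) set \<Rightarrow> tableau set" where
  "syt D = {T. (\<forall>c. c \<notin> D \<longrightarrow> T c = 0)
      \<and> bij_betw T D {1..card D}
      \<and> (\<forall>i j. (i,j) \<in> D \<and> (Suc i, j) \<in> D \<longrightarrow> T (i,j) < T (Suc i, j))
      \<and> (\<forall>i j. (i,j) \<in> D \<and> (i, Suc j) \<in> D \<longrightarrow> T (i,j) < T (i, Suc j))}"

lemma SYT_eq_syt: "SYT lam = syt (cells lam)"
  unfolding SYT_def syt_def using finite_cells_card_cells[of lam] by simp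

lemma sytD:
  assumes "T \<in> syt D"
  shows "\<And>c. c \<notin> D \<Longrightarrow> T c = 0" "bij_betw T D {1..card D}"
    "\<And>i j. (i,j) \<in> D \<Longrightarrow> (Suc i, j) \<in> D \<Longrightarrow> T (i,j) < T (Suc i, j)"
    "\<And>i j. (i,j) \<in> D \<Longrightarrow> (i, Suc j) \<in> D \<Longrightarrow> T (i,j) < T (i, Suc j)"
  using assms unfolding syt_def by blast+

lemma syt_range: "T \<in> syt D \<Longrightarrow> c \<in> D \<Longrightarrow> 1 \<le> T c \<and> T c \<le> card D"
  using sytD(2) by (fastforce simp: bij_betw_def)

lemma syt_inj: "T \<in> syt D \<Longrightarrow> c \<in> D \<Longrightarrow> c' \<in> D \<Longrightarrow> T c = T c' \<Longrightarrow> c = c'"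
  using sytD(2) by (fastforce simp: bij_betw_def inj_on_def)

lemma syt_nonzero_in: "T \<in> syt D \<Longrightarrow> T c \<noteq> 0 \<Longrightarrow> c \<in> D"
  by (metis sytD(1))

lemma syt_surj: "T \<in> syt D \<Longrightarrow> 1 \<le> k \<Longrightarrow> k \<le> card D \<Longrightarrow> \<exists>c\<in>D. T c = k"
  by (drule sytD(2)) (metis atLeastAtMost_iff bij_betw_def imageE)

lemma cell_of_syt: "T \<in> syt D \<Longrightarrow> T c = k \<Longrightarrow> 1 \<le> k \<Longrightarrow> cell_of T k = c"
  unfolding cell_of_def
proof (rule the_equality)
  fix c' assume "T \<in> syt D" "T c = k" "1 \<le> k" "T c' = k"
  then show "c' = c" using syt_nonzero_in syt_inj by (metis not_one_le_zero)
qed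

lemma cell_of_syt_in:
  assumes T: "T \<in> syt D" and k: "1 \<le> k" "k \<le> card D"
  shows "cell_of T k \<in> D \<and> T (cell_of T k) = k"
proof -
  obtain c where "c \<in> D" "T c = k" using syt_surj[OF T k] by blast
  then show ?thesis using cell_of_syt[OF T _ k(1)] by simp
qed

lemma syt_monotone:
  assumes T: "T \<in> syt D" and F: "ferrers D"
  shows "(x,y) \<in> D \<Longrightarrow> (x',y') \<in> D \<Longrightarrow> x \<le> x' \<Longrightarrow> y \<le> y' \<Longrightarrow> T (x,y) \<le> T (x',y')"
proof (induction "x' + y' - x - y" arbitrary: x' y')
  case 0
  then have "x' = x \<and> y' = y" by linarith
  then show ?case by simp
next
  case (Suc d)
  have pos: "1 \<le> x" "1 \<le> y" "1 \<le> x'" "1 \<le> y'"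
    using ferrers_pos[OF F Suc.prems(1)] ferrers_pos[OF F Suc.prems(2)] by auto
  show ?case
  proof (cases "x < x'")
    case True
    then have p: "(x'-1, y') \<in> D" using ferrersD[OF F Suc.prems(2), of "x'-1" y'] pos by simp
    have "T (x,y) \<le> T (x'-1,y')" using Suc True p by auto
    also have "\<dots> < T (x',y')" using sytD(3)[OF T p] True Suc.prems by simp
    finally show ?thesis by simp
  next
    case False
    then have "y < y'" using Suc by auto
    then have p: "(x', y'-1) \<in> D" using ferrersD[OF F Suc.prems(2), of x' "y'-1"] pos by simp
    have "T (x,y) \<le> T (x',y'-1)" using Suc \<open>y < y'\<close> p by auto
    also have "\<dots> < T (x',y')" using sytD(4)[OF T p] \<open>y < y'\<close> Suc.prems by simp
    finally show ?thesis by simp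
  qed
qed

lemma removable_syt_prefix:
  assumes T: "T \<in> syt D" and r: "r \<in> D" "T r = k"
  shows "removable {c \<in> D. T c \<le> k} r"
  using sytD(3,4)[OF T, of "fst r" "snd r"] r by (fastforce simp: removable_def)

lemma removable_syt_max:
  assumes T: "T \<in> syt D" and r: "r \<in> D" "T r = card D"
  shows "removable D r"
proof -
  have "{c \<in> D. T c \<le> card D} = D" using syt_range[OF T] by auto
  then show ?thesis using removable_syt_prefix[OF T r] by simp
qed

lemma syt_extend:
  assumes T: "T \<in> syt D" and F: "ferrers D" and c: "addable D c"
  shows "T(c := Suc (card D)) \<in> syt (insert c D)"
proof -
  have cD: "c \<notin> D" using c by (simp add: addable_def)
  have card: "card (insert c D) = Suc (card D)" using ferrers_finite[OF F] cD by simp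
  let ?T = "T(c := Suc (card D))"
  have "bij_betw ?T D {1..card D}"
    using sytD(2)[OF T] by (rule bij_betw_cong[THEN iffD1, rotated]) (use cD in auto)
  then have "bij_betw ?T (insert c D) (insert (Suc (card D)) {1..card D})"
    using notIn_Un_bij_betw[of c D ?T "{1..card D}"] cD by auto
  moreover have "insert (Suc (card D)) {1..card D} = {1..Suc (card D)}" by auto
  ultimately have bij: "bij_betw ?T (insert c D) {1..card (insert c D)}" using card by simp
  have below_c: "p \<in> D" if "p \<in> insert c D" "q \<in> insert c D" "fst p \<le> fst q" "snd p \<le> snd q"
    "p \<noteq> q" for p q
  proof -
    have "p \<noteq> c"
    proof
      assume "p = c"
      then have "q \<in> D" using that by auto
      then show False
        using ferrersD[OF F, of "fst q" "snd q" "fst c" "snd c"] c that \<open>p = c\<close>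
        by (auto simp: addable_def)
    qed
    then show ?thesis using that by auto
  qed
  have mono: "?T p < ?T q" if "p \<in> insert c D" "q \<in> insert c D" "fst p \<le> fst q" "snd p \<le> snd q"
    "p \<noteq> q" "p \<in> D \<Longrightarrow> q \<in> D \<Longrightarrow> T p < T q" for p q
    using below_c[OF that(1-5)] syt_range[OF T] that cD by (cases "q = c") fastforce+
  have "?T (i,j) < ?T (Suc i, j)" if "(i,j) \<in> insert c D" "(Suc i, j) \<in> insert c D" for i j
    using mono[OF that] sytD(3)[OF T] by simp
  moreover have "?T (i,j) < ?T (i, Suc j)" if "(i,j) \<in> insert c D" "(i, Suc j) \<in> insert c D" for i j
    using mono[OF that] sytD(4)[OF T] by simp
  ultimately show ?thesis
    unfolding syt_def using sytD(1)[OF T] bij by auto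
qed

lemma syt_nonempty:
  assumes "ferrers D" shows "syt D \<noteq> {}"
  using assms
proof (induction "card D" arbitrary: D)
  case 0
  then have "D = {}" using ferrers_finite by auto
  then have "(\<lambda>c. 0) \<in> syt D" unfolding syt_def by (simp add: bij_betw_def)
  then show ?case by blast
next
  case (Suc k)
  then obtain r where r: "removable D r" using ex_removable by fastforce
  have F': "ferrers (D - {r})" using ferrers_Diff_removable[OF Suc.prems r] .
  have rD: "r \<in> D" using r by (simp add: removable_def)
  then obtain T where "T \<in> syt (D - {r})" using Suc F' by fastforce
  then have "T(r := Suc (card (D - {r}))) \<in> syt (insert r (D - {r}))"
    using syt_extend F' addable_Diff_removable[OF Suc.prems r] by blast
  then show ?case using rD insert_Diff by force
qed

lemma card_syt_prefix:
  assumes T: "T \<in> syt D" and k: "k \<le> card D"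
  shows "card {c \<in> D. T c \<le> k} = k"
proof -
  have "T ` {c \<in> D. T c \<le> k} = {1..k}"
  proof
    show "{1..k} \<subseteq> T ` {c \<in> D. T c \<le> k}"
    proof
      fix v assume "v \<in> {1..k}"
      then obtain c where "c \<in> D" "T c = v" using syt_surj[OF T, of v] k by auto
      then show "v \<in> T ` {c \<in> D. T c \<le> k}" using \<open>v \<in> {1..k}\<close> by auto
    qed
  qed (use syt_range[OF T] in auto)
  moreover have "inj_on T {c \<in> D. T c \<le> k}"
    using sytD(2)[OF T] by (auto simp: bij_betw_def inj_on_def)
  ultimately show ?thesis using card_image by fastforce
qed

lemma ferrers_syt_prefix:
  assumes T: "T \<in> syt D" and F: "ferrers D"
  shows "ferrers {c \<in> D. T c \<le> k}"
proof -
  have "(x',y') \<in> {c \<in> D. T c \<le> k}"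
    if h: "(x,y) \<in> {c \<in> D. T c \<le> k}" "1 \<le> x'" "1 \<le> y'" "x' \<le> x" "y' \<le> y" for x y x' y'
  proof -
    have d: "(x',y') \<in> D" using ferrersD[OF F _ h(2-5)] h(1) by simp
    then have "T (x',y') \<le> T (x,y)" using syt_monotone[OF T F d _ h(4,5)] h(1) by simp
    then show ?thesis using d h(1) by simp
  qed
  moreover have "finite {c \<in> D. T c \<le> k}" using ferrers_finite[OF F] by simp
  moreover have "\<forall>x y. (x,y) \<in> {c \<in> D. T c \<le> k} \<longrightarrow> 1 \<le> x \<and> 1 \<le> y"
    using ferrers_pos[OF F] by blast
  ultimately show ?thesis unfolding ferrers_def by blast
qed

lemma syt_override_prefix:
  assumes T: "T \<in> syt D" and k: "k \<le> card D"
    and Q: "Q \<in> syt {c \<in> D. T c \<le> k}"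
  shows "override_on T Q {c \<in> D. T c \<le> k} \<in> syt D"
proof -
  define Dk where "Dk = {c \<in> D. T c \<le> k}"
  let ?S = "override_on T Q Dk"
  have cardk: "card Dk = k" using card_syt_prefix[OF T k] Dk_def by simp
  have "bij_betw Q Dk {1..k}" using sytD(2)[OF Q] cardk Dk_def by simp
  then have "bij_betw ?S Dk {1..k}"
    by (rule bij_betw_cong[THEN iffD1, rotated]) (simp add: override_on_def)
  moreover have "bij_betw ?S (D - Dk) {Suc k..card D}"
  proof -
    have "T ` (D - Dk) = {Suc k..card D}"
    proof
      show "{Suc k..card D} \<subseteq> T ` (D - Dk)"
      proof
        fix v assume v: "v \<in> {Suc k..card D}"
        then obtain c where "c \<in> D" "T c = v" using syt_surj[OF T, of v] by auto
        then show "v \<in> T ` (D - Dk)" using v Dk_def by auto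
      qed
      show "T ` (D - Dk) \<subseteq> {Suc k..card D}" using syt_range[OF T] unfolding Dk_def by fastforce
    qed
    then have "bij_betw T (D - Dk) {Suc k..card D}"
      using bij_betw_subset[OF sytD(2)[OF T], of "D - Dk"] by simp
    then show ?thesis
      by (rule bij_betw_cong[THEN iffD1, rotated]) (simp add: override_on_def)
  qed
  ultimately have "bij_betw ?S (Dk \<union> (D - Dk)) ({1..k} \<union> {Suc k..card D})"
    by (rule bij_betw_combine) auto
  moreover have "Dk \<union> (D - Dk) = D" "{1..k} \<union> {Suc k..card D} = {1..card D}"
    using k Dk_def by auto
  ultimately have bij: "bij_betw ?S D {1..card D}" by simp
  have Q': "Q \<in> syt Dk" using Q Dk_def by simp
  have less: "?S p < ?S q"
    if "p \<in> D" "q \<in> D" "T p < T q" "p \<in> Dk \<Longrightarrow> q \<in> Dk \<Longrightarrow> Q p < Q q" for p q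
  proof (cases "p \<in> Dk")
    case True
    then show ?thesis using that syt_range[OF Q' True] cardk Dk_def by (auto simp: override_on_def)
  next
    case False
    then have "q \<notin> Dk" using that Dk_def by auto
    then show ?thesis using False that by (simp add: override_on_def)
  qed
  have "?S (i,j) < ?S (Suc i, j)" if "(i,j) \<in> D" "(Suc i, j) \<in> D" for i j
    using less[OF that sytD(3)[OF T that]] sytD(3)[OF Q'] by blast
  moreover have "?S (i,j) < ?S (i, Suc j)" if "(i,j) \<in> D" "(i, Suc j) \<in> D" for i j
    using less[OF that sytD(4)[OF T that]] sytD(4)[OF Q'] by blast
  moreover have "\<forall>c. c \<notin> D \<longrightarrow> ?S c = 0" using sytD(1)[OF T] Dk_def by (auto simp: override_on_def)
  ultimately show ?thesis unfolding syt_def Dk_def[symmetric] using bij by blast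
qed

lemma syt_restrict:
  assumes T: "T \<in> syt D" and sub: "L \<subseteq> D" and fin: "finite D"
    and img: "T ` (D - L) = {Suc (card L)..card D}"
  shows "override_on (\<lambda>_. 0) T L \<in> syt L"
proof -
  let ?P = "override_on (\<lambda>_. 0) T L"
  have inj: "inj_on T D" using sytD(2)[OF T] by (simp add: bij_betw_def)
  have "T ` L \<subseteq> {1..card L}"
  proof
    fix v assume "v \<in> T ` L"
    then obtain c where c: "c \<in> L" "v = T c" by auto
    have "T c \<notin> T ` (D - L)" using c inj sub by (auto simp: inj_on_def)
    then show "v \<in> {1..card L}" using syt_range[OF T, of c] c sub img by auto
  qed
  moreover have "card (T ` L) = card L" using card_image[OF inj_on_subset[OF inj sub]] .
  ultimately have "T ` L = {1..card L}" using card_subset_eq[of "{1..card L}" "T ` L"] by simp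
  then have "bij_betw T L {1..card L}"
    using inj_on_subset[OF inj sub] by (simp add: bij_betw_def)
  then have "bij_betw ?P L {1..card L}"
    by (rule bij_betw_cong[THEN iffD1, rotated]) (simp add: override_on_def)
  then show ?thesis
    unfolding syt_def using sytD(3,4)[OF T] subsetD[OF sub] by (auto simp: override_on_def)
qed

section \<open>Corners between two contents\<close>

text \<open>If a cell strictly between the diagonals c1 and c2 is not a removable corner, then bar1 and
bar2 yield a cell of larger rank x + y that is still in D and strictly between them; so a cell of
maximal rank there is a removable corner.\<close>

lemma ex_removable_between_bars:
  assumes F: "ferrers D" and p: "p \<in> D" "c1 < content p" "content p < c2"
    and bar2: "\<And>u. u \<in> D \<Longrightarrow> content u = c2 \<Longrightarrow> (fst u, Suc (snd u)) \<in> D"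
    and bar1: "\<And>u. u \<in> D \<Longrightarrow> content u = c1 \<Longrightarrow> (Suc (fst u), snd u) \<in> D"
  shows "\<exists>q. removable D q \<and> c1 < content q \<and> content q < c2"
proof -
  define S where "S = {q \<in> D. c1 < content q \<and> content q < c2}"
  have "finite S" using ferrers_finite[OF F] S_def by simp
  moreover have "S \<noteq> {}" using p S_def by blast
  ultimately obtain q where q: "q \<in> S" and mx: "\<And>c. c \<in> S \<Longrightarrow> fst c + snd c \<le> fst q + snd q"
    using finite_obtain_arg_max[of S "\<lambda>c. fst c + snd c"] by blast
  obtain x y where qxy: "q = (x,y)" by fastforce
  have qc: "c1 < int x - int y" "int x - int y < c2" using q qxy S_def by (auto simp: content_def)
  have "(Suc x, Suc y) \<notin> D" using mx[of "(Suc x, Suc y)"] qc qxy S_def by (auto simp: content_def)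
  moreover have "(Suc x, y) \<notin> D"
  proof
    assume a: "(Suc x, y) \<in> D"
    then have "(Suc x, y) \<notin> S" using mx[of "(Suc x, y)"] qxy by auto
    then have "content (Suc x, y) = c2" using a qc S_def by (auto simp: content_def)
    then show False using bar2[OF a] \<open>(Suc x, Suc y) \<notin> D\<close> by simp
  qed
  moreover have "(x, Suc y) \<notin> D"
  proof
    assume a: "(x, Suc y) \<in> D"
    then have "(x, Suc y) \<notin> S" using mx[of "(x, Suc y)"] qxy by auto
    then have "content (x, Suc y) = c1" using a qc S_def by (auto simp: content_def)
    then show False using bar1[OF a] \<open>(Suc x, Suc y) \<notin> D\<close> by simp
  qed
  ultimately show ?thesis using q qxy S_def by (auto simp: removable_def)
qed

lemma removable_order:
  assumes F: "ferrers D" and r1: "removable D (x1,y1)" and r2: "removable D (x2,y2)"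
    and c: "content (x1,y1) < content (x2,y2)"
  shows "y2 < y1 \<and> x1 < x2"
proof -
  have d1: "(x1,y1) \<in> D" "(Suc x1, y1) \<notin> D" using r1 by (auto simp: removable_def)
  have d2: "(x2,y2) \<in> D" "(x2, Suc y2) \<notin> D" using r2 by (auto simp: removable_def)
  have "y2 < y1"
  proof (rule ccontr)
    assume "\<not> y2 < y1"
    moreover have "x1 < x2" using c calculation by (auto simp: content_def)
    ultimately show False using ferrersD[OF F d2(1), of "Suc x1" y1] ferrers_pos[OF F d1(1)] d1 by auto
  qed
  moreover have "x1 < x2"
    using ferrersD[OF F d1(1), of x2 "Suc y2"] ferrers_pos[OF F d2(1)] d2 calculation by force
  ultimately show ?thesis by simp
qed

lemma removable_diagonal_below:
  assumes F: "ferrers D" and r: "removable D (x,y)"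
    and u: "(a,b) \<in> D" "content (a,b) = content (x,y)" "(a,b) \<noteq> (x,y)"
  shows "a < x \<and> b < y"
proof -
  have "\<not> y < b"
  proof
    assume "y < b"
    then have "x < a" using u by (simp add: content_def)
    moreover have "1 \<le> y" using r ferrers_pos[OF F, of x y] by (simp add: removable_def)
    ultimately have "(Suc x, y) \<in> D" using ferrersD[OF F u(1), of "Suc x" y] \<open>y < b\<close> by simp
    then show False using r by (simp add: removable_def)
  qed
  then show ?thesis using u by (auto simp: content_def)
qed

lemma removable_content_inj:
  assumes F: "ferrers D" and r1: "removable D r1" and r2: "removable D r2" and ne: "r1 \<noteq> r2"
  shows "content r1 \<noteq> content r2"
proof
  assume e: "content r1 = content r2"
  obtain a b where ab: "r1 = (a,b)" by fastforce
  obtain x y where xy: "r2 = (x,y)" by fastforce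
  have "a < x \<and> b < y"
    using removable_diagonal_below[OF F, of x y a b] r1 r2 e ne ab xy by (simp add: removable_def)
  then have "(Suc a, b) \<in> D" using ferrersD[OF F, of x y "Suc a" b] r1 r2 ab xy F
    by (auto simp: removable_def dest: ferrers_pos)
  then show False using r1 ab by (simp add: removable_def)
qed

lemma ex_removable_between_removables:
  assumes F: "ferrers D" and r1: "removable D r1" and r2: "removable D r2"
    and c: "content r1 < content r2"
  shows "\<exists>q. removable (D - {r1, r2}) q \<and> content r1 < content q \<and> content q < content r2"
proof -
  obtain x1 y1 x2 y2 where rr: "r1 = (x1,y1)" "r2 = (x2,y2)" by fastforce
  have o: "y2 < y1" "x1 < x2" using removable_order[OF F, of x1 y1 x2 y2] r1 r2 c rr by auto
  have rD: "(x1,y1) \<in> D" "(x2,y2) \<in> D" using r1 r2 rr by (auto simp: removable_def)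
  have "r1 \<noteq> r2" using c by auto
  then have r2': "removable (D - {r1}) r2" using removable_subset[OF r2, of "D - {r1}"] rD rr by auto
  have "D - {r1, r2} = D - {r1} - {r2}" by auto
  then have F': "ferrers (D - {r1, r2})"
    using ferrers_Diff_removable[OF ferrers_Diff_removable[OF F r1] r2'] by simp
  have pos: "1 \<le> x1" "1 \<le> y2" using ferrers_pos[OF F rD(1)] ferrers_pos[OF F rD(2)] by auto
  have gap: "content r1 + 2 \<le> content r2" using o rr by (simp add: content_def)
  have pD: "(x1,y2) \<in> D - {r1, r2}" using ferrersD[OF F rD(2) pos] o rr by auto
  show ?thesis
  proof (rule ex_removable_between_bars[OF F' pD])
    show "content r1 < content (x1, y2)" "content (x1, y2) < content r2"
      using o rr by (simp_all add: content_def)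
  next
    fix u assume u: "u \<in> D - {r1, r2}" "content u = content r2"
    then have "fst u < x2 \<and> snd u < y2"
      using removable_diagonal_below[OF F, of x2 y2 "fst u" "snd u"] r2 rr by auto
    then have "(fst u, Suc (snd u)) \<in> D"
      using ferrersD[OF F rD(2), of "fst u" "Suc (snd u)"] ferrers_pos[OF F, of "fst u" "snd u"] u by auto
    moreover have "content (fst u, Suc (snd u)) = content r2 - 1" using u by (simp add: content_def)
    ultimately show "(fst u, Suc (snd u)) \<in> D - {r1, r2}" using gap by auto
  next
    fix u assume u: "u \<in> D - {r1, r2}" "content u = content r1"
    then have "fst u < x1 \<and> snd u < y1"
      using removable_diagonal_below[OF F, of x1 y1 "fst u" "snd u"] r1 rr by auto
    then have "(Suc (fst u), snd u) \<in> D"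
      using ferrersD[OF F rD(1), of "Suc (fst u)" "snd u"] ferrers_pos[OF F, of "fst u" "snd u"] u by auto
    moreover have "content (Suc (fst u), snd u) = content r1 + 1" using u by (simp add: content_def)
    ultimately show "(Suc (fst u), snd u) \<in> D - {r1, r2}" using gap by auto
  qed
qed

lemma ex_removable_between_distinct_removables:
  assumes F: "ferrers D" and r: "removable D r" and r': "removable D r'" and ne: "r \<noteq> r'"
  shows "\<exists>q. removable (D - {r, r'}) q \<and>
     ((content r < content q \<and> content q < content r') \<or> (content r' < content q \<and> content q < content r))"
proof (cases "content r < content r'")
  case True
  then show ?thesis using ex_removable_between_removables[OF F r r'] by blast
next
  case False
  then have "content r' < content r" using removable_content_inj[OF F r r' ne] by simp
  moreover have "D - {r', r} = D - {r, r'}" by auto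
  ultimately show ?thesis using ex_removable_between_removables[OF F r' r] by auto
qed

text \<open>Dually, a non-cell of minimal rank strictly between the two diagonals is addable.\<close>

lemma ex_addable_between_bars:
  assumes F: "ferrers D" and p: "1 \<le> fst p" "1 \<le> snd p" "p \<notin> D" "c1 < content p" "content p < c2"
    and bar1: "\<And>u. 1 \<le> fst u \<Longrightarrow> 1 \<le> snd u \<Longrightarrow> u \<notin> D \<Longrightarrow> content u = c1 \<Longrightarrow> 2 \<le> snd u \<and> (fst u, snd u - 1) \<notin> D"
    and bar2: "\<And>u. 1 \<le> fst u \<Longrightarrow> 1 \<le> snd u \<Longrightarrow> u \<notin> D \<Longrightarrow> content u = c2 \<Longrightarrow> 2 \<le> fst u \<and> (fst u - 1, snd u) \<notin> D"
  shows "\<exists>a. addable D a \<and> c1 < content a \<and> content a < c2"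
proof -
  define U where "U = (\<lambda>u::nat\<times>nat. 1 \<le> fst u \<and> 1 \<le> snd u \<and> u \<notin> D \<and> c1 < content u \<and> content u < c2)"
  define f where "f = (\<lambda>c::nat\<times>nat. fst c + snd c)"
  have "U p" using p U_def by simp
  then obtain a where a: "U a" and mn: "\<And>u. U u \<Longrightarrow> f a \<le> f u"
    using ex_has_least_nat[of U p f] by blast
  obtain x y where axy: "a = (x,y)" by fastforce
  have ax: "1 \<le> x" "1 \<le> y" "(x,y) \<notin> D" "c1 < content (x,y)" "content (x,y) < c2"
    using a axy U_def by auto
  have l: "(x - 1, y) \<in> D" if x2: "2 \<le> x"
  proof (rule ccontr)
    assume nd: "(x - 1, y) \<notin> D"
    have cc: "content (x - 1, y) = content (x,y) - 1" using x2 by (simp add: content_def)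
    show False
    proof (cases "c1 < content (x - 1, y)")
      case True
      then have "U (x - 1, y)" using nd ax x2 cc U_def by simp
      then show False using mn[of "(x-1,y)"] axy x2 by (simp add: f_def)
    next
      case False
      then have "content (x - 1, y) = c1" using cc ax by simp
      then have b: "2 \<le> y" "(x - 1, y - 1) \<notin> D" using bar1[of "(x-1,y)"] x2 ax nd by auto
      have "content (x - 1, y - 1) = content (x,y)" using b x2 by (simp add: content_def)
      moreover have "1 \<le> x - 1" "1 \<le> y - 1" using b x2 by linarith+
      ultimately have "U (x - 1, y - 1)" using b ax unfolding U_def by simp
      then show False using mn[of "(x-1,y-1)"] axy x2 b by (simp add: f_def)
    qed
  qed
  have d: "(x, y - 1) \<in> D" if y2: "2 \<le> y"
  proof (rule ccontr)
    assume nd: "(x, y - 1) \<notin> D"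
    have cc: "content (x, y - 1) = content (x,y) + 1" using y2 by (simp add: content_def)
    show False
    proof (cases "content (x, y - 1) < c2")
      case True
      then have "U (x, y - 1)" using nd ax y2 cc U_def by simp
      then show False using mn[of "(x,y-1)"] axy y2 by (simp add: f_def)
    next
      case False
      then have "content (x, y - 1) = c2" using cc ax by simp
      then have b: "2 \<le> x" "(x - 1, y - 1) \<notin> D" using bar2[of "(x,y-1)"] y2 ax nd by auto
      have "content (x - 1, y - 1) = content (x,y)" using b y2 by (simp add: content_def)
      moreover have "1 \<le> x - 1" "1 \<le> y - 1" using b y2 by linarith+
      ultimately have "U (x - 1, y - 1)" using b ax unfolding U_def by simp
      then show False using mn[of "(x-1,y-1)"] axy y2 b by (simp add: f_def)
    qed
  qed
  have "addable D (x,y)" unfolding addable_def using ax l d by simp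
  then show ?thesis using ax by blast
qed

lemma removable_diagonal_above:
  assumes F: "ferrers D" and r: "removable D (x,y)"
    and u: "(a,b) \<notin> D" "1 \<le> a" "1 \<le> b" "content (a,b) = content (x,y)"
  shows "x < a \<and> y < b"
proof -
  have "(x,y) \<in> D" using r by (simp add: removable_def)
  then have "\<not> b \<le> y" using ferrersD[OF F, of x y a b] u by (auto simp: content_def)
  then show ?thesis using u by (auto simp: content_def)
qed

lemma ex_addable_between_removables:
  assumes F: "ferrers D" and r1: "removable D r1" and r2: "removable D r2"
    and c: "content r1 < content r2"
  shows "\<exists>a. addable D a \<and> content r1 < content a \<and> content a < content r2"
proof -
  obtain x1 y1 x2 y2 where rr: "r1 = (x1,y1)" "r2 = (x2,y2)" by fastforce
  have o: "y2 < y1" "x1 < x2" using removable_order[OF F, of x1 y1 x2 y2] r1 r2 c rr by auto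
  have d1: "(Suc x1, y1) \<notin> D" and d2: "(x2, Suc y2) \<notin> D" using r1 r2 rr by (auto simp: removable_def)
  have p1: "1 \<le> y1" and p2: "1 \<le> x2"
    using ferrers_pos[OF F, of x1 y1] ferrers_pos[OF F, of x2 y2] r1 r2 rr by (auto simp: removable_def)
  show ?thesis
  proof (rule ex_addable_between_bars[OF F, of "(Suc x1, y1)"])
    show "1 \<le> fst (Suc x1, y1)" "1 \<le> snd (Suc x1, y1)" "(Suc x1, y1) \<notin> D" using p1 d1 by auto
    show "content r1 < content (Suc x1, y1)" "content (Suc x1, y1) < content r2"
      using o rr by (simp_all add: content_def)
  next
    fix u assume u: "1 \<le> fst u" "1 \<le> snd u" "u \<notin> D" "content u = content r1"
    then have less: "x1 < fst u" "y1 < snd u"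
      using removable_diagonal_above[OF F, of x1 y1 "fst u" "snd u"] r1 rr by auto
    moreover have "y1 \<le> snd u - 1" using less by simp
    ultimately have "(fst u, snd u - 1) \<notin> D"
      using ferrersD[OF F, of "fst u" "snd u - 1" "Suc x1" y1] d1 p1 by auto
    then show "2 \<le> snd u \<and> (fst u, snd u - 1) \<notin> D" using less p1 by simp
  next
    fix u assume u: "1 \<le> fst u" "1 \<le> snd u" "u \<notin> D" "content u = content r2"
    then have less: "x2 < fst u" "y2 < snd u"
      using removable_diagonal_above[OF F, of x2 y2 "fst u" "snd u"] r2 rr by auto
    moreover have "x2 \<le> fst u - 1" using less by simp
    ultimately have "(fst u - 1, snd u) \<notin> D"
      using ferrersD[OF F, of "fst u - 1" "snd u" x2 "Suc y2"] d2 p2 by auto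
    then show "2 \<le> fst u \<and> (fst u - 1, snd u) \<notin> D" using less p2 by simp
  qed
qed

lemma addable_order:
  assumes F: "ferrers D" and a: "addable D (x1,y1)" and c: "addable D (x2,y2)"
    and ne: "(x1,y1) \<noteq> (x2,y2)" and le: "content (x1,y1) \<le> content (x2,y2)"
  shows "y2 < y1 \<and> x1 < x2"
proof -
  have a': "(x1,y1) \<notin> D" "1 \<le> x1" "1 \<le> y1" "2 \<le> x1 \<Longrightarrow> (x1 - 1, y1) \<in> D" "2 \<le> y1 \<Longrightarrow> (x1, y1 - 1) \<in> D"
    using a by (auto simp: addable_def)
  have c': "(x2,y2) \<notin> D" "1 \<le> x2" "1 \<le> y2" "2 \<le> x2 \<Longrightarrow> (x2 - 1, y2) \<in> D" "2 \<le> y2 \<Longrightarrow> (x2, y2 - 1) \<in> D"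
    using c by (auto simp: addable_def)
  have cl: "int x1 - int y1 \<le> int x2 - int y2" using le by (simp add: content_def)
  have "y2 < y1"
  proof (rule ccontr)
    assume "\<not> y2 < y1"
    then have "x1 \<le> x2" using cl by linarith
    show False
    proof (cases "x1 < x2")
      case True
      then have "2 \<le> x2" using a' by linarith
      then have "(x2 - 1, y2) \<in> D" using c' by simp
      moreover have "x1 \<le> x2 - 1" "y1 \<le> y2" using True \<open>\<not> y2 < y1\<close> by simp_all
      ultimately have "(x1, y1) \<in> D" using ferrersD[OF F, of "x2 - 1" y2 x1 y1] a' by simp
      then show False using a' by simp
    next
      case False
      then have "x1 = x2" "y1 = y2" using \<open>x1 \<le> x2\<close> cl \<open>\<not> y2 < y1\<close> by linarith+
      then show False using ne by simp
    qed
  qed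
  moreover have "x1 < x2"
  proof (rule ccontr)
    assume "\<not> x1 < x2"
    have "(x1, y1 - 1) \<in> D" using a' \<open>y2 < y1\<close> c' by simp
    moreover have "x2 \<le> x1" "y2 \<le> y1 - 1" using \<open>\<not> x1 < x2\<close> \<open>y2 < y1\<close> by simp_all
    ultimately have "(x2, y2) \<in> D" using ferrersD[OF F, of x1 "y1-1" x2 y2] c' by simp
    then show False using c' by simp
  qed
  ultimately show ?thesis by simp
qed

lemma addable_diagonal_below:
  assumes F: "ferrers D" and a: "addable D (x,y)"
    and u: "(p,q) \<in> D" "content (p,q) = content (x,y)"
  shows "p < x \<and> q < y"
proof -
  have "\<not> y \<le> q"
    using ferrersD[OF F u(1), of x y] a u(2) by (auto simp: addable_def content_def)
  then show ?thesis using u(2) by (auto simp: content_def)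
qed

lemma ex_removable_between_addables:
  assumes F: "ferrers D" and a: "addable D (x1,y1)" and c: "addable D (x2,y2)"
    and ne: "(x1,y1) \<noteq> (x2,y2)" and le: "content (x1,y1) \<le> content (x2,y2)"
  shows "\<exists>r. removable D r \<and> content (x1,y1) < content r \<and> content r < content (x2,y2)"
proof -
  have o: "y2 < y1" "x1 < x2" using addable_order[OF F a c ne le] by auto
  have L2: "(x2 - 1, y2) \<in> D" and L1: "(x1, y1 - 1) \<in> D"
    using a c o by (auto simp: addable_def)
  have pos: "1 \<le> x1" "1 \<le> y2" using a c by (auto simp: addable_def)
  have pD: "(x1, y2) \<in> D" using ferrersD[OF F L2 pos] o by simp
  show ?thesis
  proof (rule ex_removable_between_bars[OF F pD])
    show "content (x1, y1) < content (x1, y2)" "content (x1, y2) < content (x2, y2)"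
      using o by (simp_all add: content_def)
  next
    fix u assume u: "u \<in> D" "content u = content (x2,y2)"
    then have "fst u < x2" "snd u < y2" using addable_diagonal_below[OF F c, of "fst u" "snd u"] by auto
    then show "(fst u, Suc (snd u)) \<in> D"
      using ferrersD[OF F L2, of "fst u" "Suc (snd u)"] ferrers_pos[OF F, of "fst u" "snd u"] u(1) by simp
  next
    fix u assume u: "u \<in> D" "content u = content (x1,y1)"
    then have "fst u < x1" "snd u < y1" using addable_diagonal_below[OF F a, of "fst u" "snd u"] by auto
    then show "(Suc (fst u), snd u) \<in> D"
      using ferrersD[OF F L1, of "Suc (fst u)" "snd u"] ferrers_pos[OF F, of "fst u" "snd u"] u(1) by simp
  qed
qed

definition right_cell :: "(nat \<times> nat) set \<Rightarrow> nat \<times> nat" where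
  "right_cell D = (Suc (Max (insert 0 {x. (x,1) \<in> D})), 1)"

definition top_cell :: "(nat \<times> nat) set \<Rightarrow> nat \<times> nat" where
  "top_cell D = (1, Suc (Max (insert 0 {y. (1,y) \<in> D})))"

lemma addable_right_cell:
  assumes F: "ferrers D"
  shows "addable D (right_cell D) \<and> (\<forall>c\<in>D. content c < content (right_cell D))"
proof -
  define K where "K = Max (insert 0 {x. (x,1) \<in> D})"
  have fin: "finite {x. (x,1) \<in> D}"
    using finite_subset[of "{x. (x,1) \<in> D}" "fst ` D"] ferrers_finite[OF F] by force
  have ub: "x \<le> K" if "(x,1) \<in> D" for x using fin that K_def by simp
  have kin: "K \<in> insert 0 {x. (x,1) \<in> D}" unfolding K_def by (rule Max_in) (use fin in auto)
  have rc: "right_cell D = (Suc K, 1)" unfolding right_cell_def K_def by simp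
  have all: "content c < content (right_cell D)" if "c \<in> D" for c
  proof -
    obtain x y where c: "c = (x,y)" by fastforce
    have p: "1 \<le> x" "1 \<le> y" using ferrers_pos[OF F] that c by auto
    have "(x,1) \<in> D" using ferrersD[OF F, of x y x 1] that c p by simp
    then have "x \<le> K" using ub by simp
    then show ?thesis using c p rc by (simp add: content_def)
  qed
  have "(Suc K, 1) \<notin> D" using ub by fastforce
  moreover have "(K, 1) \<in> D" if "2 \<le> Suc K"
  proof -
    from kin have "K = 0 \<or> (K,1) \<in> D" by blast
    then show ?thesis using that by auto
  qed
  ultimately have "addable D (right_cell D)" unfolding addable_def rc by simp
  then show ?thesis using all by blast
qed

lemma addable_top_cell:
  assumes F: "ferrers D"
  shows "addable D (top_cell D) \<and> (\<forall>c\<in>D. content (top_cell D) < content c)"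
proof -
  define K where "K = Max (insert 0 {y. (1,y) \<in> D})"
  have fin: "finite {y. (1,y) \<in> D}"
    using finite_subset[of "{y. (1,y) \<in> D}" "snd ` D"] ferrers_finite[OF F] by force
  have ub: "y \<le> K" if "(1,y) \<in> D" for y using fin that K_def by simp
  have kin: "K \<in> insert 0 {y. (1,y) \<in> D}" unfolding K_def by (rule Max_in) (use fin in auto)
  have tc: "top_cell D = (1, Suc K)" unfolding top_cell_def K_def by simp
  have all: "content (top_cell D) < content c" if "c \<in> D" for c
  proof -
    obtain x y where c: "c = (x,y)" by fastforce
    have p: "1 \<le> x" "1 \<le> y" using ferrers_pos[OF F] that c by auto
    have "(1,y) \<in> D" using ferrersD[OF F, of x y 1 y] that c p by simp
    then have "y \<le> K" using ub by simp
    then show ?thesis using c p tc by (simp add: content_def)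
  qed
  have "(1, Suc K) \<notin> D" using ub by fastforce
  moreover have "(1, K) \<in> D" if "2 \<le> Suc K"
  proof -
    from kin have "K = 0 \<or> (1,K) \<in> D" by blast
    then show ?thesis using that by auto
  qed
  ultimately have "addable D (top_cell D)" unfolding addable_def tc by simp
  then show ?thesis using all by blast
qed

lemma addable_empty: "addable {} c \<Longrightarrow> c = (1,1)"
  unfolding addable_def by (cases c) auto

section \<open>Connectivity of standard tableaux under elementary dual equivalences\<close>

lemma syt_extend_removable:
  assumes F: "ferrers D" and r: "removable D r" and Q: "Q \<in> syt (D - {r})"
  shows "Q(r := card D) \<in> syt D"
proof -
  have rD: "r \<in> D" using r by (simp add: removable_def)
  then have "card D = Suc (card (D - {r}))" using card.remove[OF ferrers_finite[OF F]] by blast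
  moreover have "insert r (D - {r}) = D" using rD by blast
  ultimately show ?thesis
    using syt_extend[OF Q ferrers_Diff_removable[OF F r] addable_Diff_removable[OF F r]] by simp
qed

lemma syt_extend_two_removables:
  assumes F: "ferrers D" and r: "removable D r" and r': "removable D r'" and ne: "r \<noteq> r'"
    and Q: "Q \<in> syt (D - {r, r'})"
  shows "Q(r' := card D - 1, r := card D) \<in> syt D"
proof -
  have r'D: "r' \<in> D" using r' by (simp add: removable_def)
  have r'': "removable (D - {r}) r'" using removable_subset[OF r', of "D - {r}"] r'D ne by blast
  have "D - {r} - {r'} = D - {r, r'}" by blast
  then have "Q(r' := card (D - {r})) \<in> syt (D - {r})"
    using syt_extend_removable[OF ferrers_Diff_removable[OF F r] r''] Q by simp
  moreover have "card (D - {r}) = card D - 1" using r by (simp add: removable_def)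
  ultimately show ?thesis using syt_extend_removable[OF F r] by simp
qed

lemma dual_d_eq_swap:
  assumes S: "S \<in> syt L" and k: "2 \<le> k"
    and v: "S q = k - 1" "S r' = k" "S r = Suc k"
    and btw: "(rd_less r q \<and> rd_less q r') \<or> (rd_less r' q \<and> rd_less q r)"
  shows "dual_d k S = swap_entries S k (Suc k)"
proof -
  have cells: "cell_of S (k - 1) = q" "cell_of S k = r'" "cell_of S (Suc k) = r"
    using cell_of_syt[OF S v(1)] cell_of_syt[OF S v(2)] cell_of_syt[OF S v(3)] k by auto
  from btw show ?thesis
  proof
    assume b: "rd_less r q \<and> rd_less q r'"
    then have "rd_less r r'" using rd_less_trans by blast
    with b show ?thesis unfolding dual_d_def rlt_def cells by (auto dest: rd_less_asym)
  next
    assume b: "rd_less r' q \<and> rd_less q r"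
    then have "rd_less r' r" using rd_less_trans by blast
    with b show ?thesis unfolding dual_d_def rlt_def cells by (auto dest: rd_less_asym)
  qed
qed

lemma ex_syt_Diff_two_removables:
  assumes F: "ferrers D" and r: "removable D r" and r': "removable D r'" and ne: "r \<noteq> r'"
    and card: "card D = Suc k" and q: "removable (D - {r, r'}) q"
  obtains Q where "Q \<in> syt (D - {r, r'})" "Q q = k - 1" "2 \<le> k"
    "\<And>c. c \<in> D - {r, r'} \<Longrightarrow> Q c \<le> k - 1"
proof -
  have rD: "r \<in> D" "r' \<in> D" using r r' by (simp_all add: removable_def)
  have r'': "removable (D - {r}) r'" using removable_subset[OF r', of "D - {r}"] rD ne by blast
  have "D - {r} - {r'} = D - {r, r'}" by blast
  then have F1: "ferrers (D - {r, r'})"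
    using ferrers_Diff_removable[OF ferrers_Diff_removable[OF F r] r''] by simp
  have card1: "card (D - {r, r'}) = k - 1"
    using card rD ne ferrers_finite[OF F] by (simp add: card_Diff_subset)
  have "0 < card (D - {r, r'})"
    using card_gt_0_iff[of "D - {r, r'}"] ferrers_finite[OF F1] q by (auto simp: removable_def)
  then have k2: "2 \<le> k" using card1 by simp
  obtain Q0 where Q0: "Q0 \<in> syt (D - {r, r'} - {q})"
    using syt_nonempty[OF ferrers_Diff_removable[OF F1 q]] by blast
  then have Q: "Q0(q := k - 1) \<in> syt (D - {r, r'})"
    using syt_extend_removable[OF F1 q] card1 by fastforce
  then show ?thesis using that k2 syt_range[OF Q] card1 by simp
qed

lemma ex_dual_d_exchanging_corners:
  assumes T: "T \<in> syt L" and F: "ferrers L" and k: "Suc k \<le> card L"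
    and r: "removable {c \<in> L. T c \<le> Suc k} r" and r': "removable {c \<in> L. T c \<le> Suc k} r'"
    and ne: "r \<noteq> r'"
  obtains S S' where "S \<in> syt L" "S' \<in> syt L" "dual_d k S = S'" "S r = Suc k" "S r' = k" "S' r' = Suc k"
    "2 \<le> k" "\<And>c. Suc k < T c \<Longrightarrow> S c = T c \<and> S' c = T c"
    "\<And>c. T c \<le> Suc k \<Longrightarrow> S c \<le> Suc k \<and> S' c \<le> Suc k"
proof -
  define Dk where "Dk = {c \<in> L. T c \<le> Suc k}"
  have FD: "ferrers Dk" using ferrers_syt_prefix[OF T F] Dk_def by simp
  have cD: "card Dk = Suc k" using card_syt_prefix[OF T k] Dk_def by simp
  have r1: "removable Dk r" and r2: "removable Dk r'" using r r' Dk_def by simp_all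
  obtain q where q: "removable (Dk - {r, r'}) q"
    and btw: "(content r < content q \<and> content q < content r') \<or> (content r' < content q \<and> content q < content r)"
    using ex_removable_between_distinct_removables[OF FD r1 r2 ne] by blast
  have rD: "r \<in> Dk" "r' \<in> Dk" using r1 r2 by (simp_all add: removable_def)
  have qD: "q \<in> Dk" "q \<noteq> r" "q \<noteq> r'" using q by (auto simp: removable_def)
  obtain Q1 where Q1: "Q1 \<in> syt (Dk - {r, r'})" "Q1 q = k - 1" and k2: "2 \<le> k"
    and Q1_range: "\<And>c. c \<in> Dk - {r, r'} \<Longrightarrow> Q1 c \<le> k - 1"
    using ex_syt_Diff_two_removables[OF FD r1 r2 ne cD q] by blast
  define S where "S = override_on T (Q1(r' := k, r := Suc k)) Dk"
  define S' where "S' = override_on T (Q1(r := k, r' := Suc k)) Dk"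
  have "Q1(r' := k, r := Suc k) \<in> syt Dk" "Q1(r := k, r' := Suc k) \<in> syt Dk"
    using syt_extend_two_removables[OF FD r1 r2 ne Q1(1)] syt_extend_two_removables[OF FD r2 r1 ne[symmetric]] Q1(1) cD
    by (simp_all add: insert_commute)
  then have S: "S \<in> syt L" and S': "S' \<in> syt L"
    using syt_override_prefix[OF T k] unfolding S_def S'_def Dk_def by simp_all
  have vals: "S q = k - 1" "S r' = k" "S r = Suc k" "S' r = k" "S' r' = Suc k"
    using qD rD ne Q1(2) unfolding S_def S'_def override_on_def by auto
  have "dual_d k S = swap_entries S k (Suc k)"
    using dual_d_eq_swap[OF S k2 vals(1-3)] btw rd_less_if_content_less by blast
  moreover have "swap_entries S k (Suc k) = S'"
  proof
    fix c
    show "swap_entries S k (Suc k) c = S' c"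
    proof (cases "c \<in> Dk")
      case False
      then have "T c \<noteq> k \<and> T c \<noteq> Suc k" using sytD(1)[OF T, of c] k2 Dk_def by auto
      then show ?thesis using False unfolding swap_entries_def S_def S'_def override_on_def by simp
    next
      case True
      then show ?thesis
        using vals Q1_range[of c] k2 unfolding swap_entries_def S_def S'_def override_on_def by auto
    qed
  qed
  moreover have "S c = T c \<and> S' c = T c" if "Suc k < T c" for c
    using that unfolding S_def S'_def Dk_def override_on_def by simp
  moreover have "S c \<le> Suc k \<and> S' c \<le> Suc k" if "T c \<le> Suc k" for c
  proof (cases "c \<in> Dk")
    case True
    then show ?thesis using Q1_range[of c] vals unfolding S_def S'_def override_on_def by auto
  next
    case False
    then show ?thesis using that sytD(1)[OF T, of c] unfolding S_def S'_def override_on_def Dk_def by auto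
  qed
  ultimately show ?thesis using that S S' vals k2 by metis
qed

definition dual_moves :: "(nat \<times> nat) set \<Rightarrow> nat \<Rightarrow> (tableau \<times> tableau) set" where
  "dual_moves D m = {(S, S'). S \<in> syt D \<and> S' \<in> syt D \<and> (\<exists>i. 1 < i \<and> i < m \<and> S' = dual_d i S)}"

abbreviation dual_connected :: "(nat \<times> nat) set \<Rightarrow> nat \<Rightarrow> (tableau \<times> tableau) set" where
  "dual_connected D m \<equiv> (dual_moves D m \<union> (dual_moves D m)\<inverse>)\<^sup>*"

definition agree_above :: "nat \<Rightarrow> tableau \<Rightarrow> tableau \<Rightarrow> bool" where
  "agree_above m T T' \<longleftrightarrow> (\<forall>c. m < T c \<or> m < T' c \<longrightarrow> T c = T' c)"

lemma dual_moves_mono: "m \<le> m' \<Longrightarrow> dual_moves D m \<subseteq> dual_moves D m'"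
  unfolding dual_moves_def by (auto intro: less_le_trans)

lemma dual_connected_mono: "m \<le> m' \<Longrightarrow> dual_connected D m \<subseteq> dual_connected D m'"
  using dual_moves_mono by (intro rtrancl_mono) blast

lemma agree_above_0: "agree_above 0 T T' \<Longrightarrow> T = T'"
proof
  fix c assume "agree_above 0 T T'"
  then show "T c = T' c" unfolding agree_above_def by (metis neq0_conv)
qed

lemma agree_above_Suc_same_cell:
  assumes T: "T \<in> syt D" and T': "T' \<in> syt D" and ag: "agree_above (Suc m) T T'"
    and r: "T r = Suc m" "T' r = Suc m"
  shows "agree_above m T T'"
  unfolding agree_above_def
proof (intro allI impI)
  fix c assume "m < T c \<or> m < T' c"
  then consider "Suc m < T c \<or> Suc m < T' c" | "T c = Suc m" | "T' c = Suc m" by linarith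
  then show "T c = T' c"
  proof cases
    case 1
    then show ?thesis using ag unfolding agree_above_def by blast
  next
    case 2
    then have "c = r" using syt_inj[OF T] syt_nonzero_in[OF T] r by (metis nat.distinct(1))
    then show ?thesis using r 2 by simp
  next
    case 3
    then have "c = r" using syt_inj[OF T'] syt_nonzero_in[OF T'] r by (metis nat.distinct(1))
    then show ?thesis using r 3 by simp
  qed
qed

lemma agree_above_exchange:
  assumes T: "T \<in> syt D" and S: "S \<in> syt D" and r: "T r = Suc m" "S r = Suc m"
    and above: "\<And>c. Suc m < T c \<Longrightarrow> S c = T c" and below: "\<And>c. T c \<le> Suc m \<Longrightarrow> S c \<le> Suc m"
  shows "agree_above m T S"
proof -
  have "agree_above (Suc m) T S"
    unfolding agree_above_def using above below by (metis not_le)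
  then show ?thesis using agree_above_Suc_same_cell[OF T S _ r] by blast
qed

text \<open>In the induction step the two cells holding m + 1 are exchanged by a single move d_m.\<close>

lemma dual_connected_if_agree_above:
  assumes F: "ferrers D"
  shows "m \<le> card D \<Longrightarrow> T \<in> syt D \<Longrightarrow> T' \<in> syt D \<Longrightarrow> agree_above m T T'
    \<Longrightarrow> (T, T') \<in> dual_connected D m"
proof (induction m arbitrary: T T')
  case 0
  then show ?case using agree_above_0 by blast
next
  case (Suc m)
  note T = Suc.prems(2) and T' = Suc.prems(3) and ag = Suc.prems(4)
  have sub: "dual_connected D m \<subseteq> dual_connected D (Suc m)" by (rule dual_connected_mono) simp
  obtain r where r: "r \<in> D" "T r = Suc m" using syt_surj[OF T, of "Suc m"] Suc.prems(1) by auto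
  obtain r' where r': "r' \<in> D" "T' r' = Suc m" using syt_surj[OF T', of "Suc m"] Suc.prems(1) by auto
  show ?case
  proof (cases "r = r'")
    case True
    then have "agree_above m T T'" using agree_above_Suc_same_cell[OF T T' ag] r r' by simp
    then show ?thesis using Suc.IH[OF _ T T'] Suc.prems(1) sub by auto
  next
    case False
    have same_prefix: "T c \<le> Suc m \<longleftrightarrow> T' c \<le> Suc m" for c
      using ag unfolding agree_above_def by (metis not_le)
    have rr: "removable {c \<in> D. T c \<le> Suc m} r" using removable_syt_prefix[OF T r] .
    have rr': "removable {c \<in> D. T c \<le> Suc m} r'"
      using removable_syt_prefix[OF T' r'] same_prefix by simp
    obtain S S' where S: "S \<in> syt D" "S' \<in> syt D" "dual_d m S = S'" "S r = Suc m" "S' r' = Suc m"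
      "2 \<le> m" "\<And>c. Suc m < T c \<Longrightarrow> S c = T c \<and> S' c = T c"
      "\<And>c. T c \<le> Suc m \<Longrightarrow> S c \<le> Suc m \<and> S' c \<le> Suc m"
      using ex_dual_d_exchanging_corners[OF T F Suc.prems(1) rr rr' False] by metis
    have "agree_above m T S" using agree_above_exchange[OF T S(1) r(2) S(4)] S(7,8) by blast
    then have p1: "(T, S) \<in> dual_connected D m" using Suc.IH[OF _ T S(1)] Suc.prems(1) by simp
    have "S' c = T' c" if "Suc m < T' c" for c
      using S(7) same_prefix ag that unfolding agree_above_def by metis
    then have "agree_above m T' S'"
      using agree_above_exchange[OF T' S(2) r'(2) S(5)] S(8) same_prefix by blast
    then have "agree_above m S' T'" unfolding agree_above_def by metis
    then have p2: "(S', T') \<in> dual_connected D m" using Suc.IH[OF _ S(2) T'] Suc.prems(1) by simp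
    have "1 < m" "m < Suc m" using S(6) by auto
    then have "(S, S') \<in> dual_moves D (Suc m)" unfolding dual_moves_def using S(1-3) by blast
    then have "(S, S') \<in> dual_connected D (Suc m)" by blast
    with p1 p2 sub show ?thesis by (meson rtrancl_trans subsetD)
  qed
qed

section \<open>Growing a diagram by extreme cells\<close>

definition extreme_cell :: "(nat \<Rightarrow> int) \<Rightarrow> nat \<Rightarrow> (nat \<times> nat) set \<Rightarrow> nat \<times> nat" where
  "extreme_cell s k D = (if s k = 1 then right_cell D else top_cell D)"

text \<open>Starting from L with n cells, the cell a receives n + 1 and each further entry
k > n + 1 is placed at the end of the bottom row or on top of the first column, according
to whether s (k - 1) records an ascent or a descent at k - 1.\<close>

primrec grown :: "(nat \<times> nat) set \<Rightarrow> nat \<times> nat \<Rightarrow> (nat \<Rightarrow> int) \<Rightarrow> nat \<Rightarrow> nat \<Rightarrow> (nat \<times> nat) set" where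
  "grown L a s n 0 = insert a L"
| "grown L a s n (Suc m) = insert (extreme_cell s (Suc n + m) (grown L a s n m)) (grown L a s n m)"

fun grown_cell :: "(nat \<times> nat) set \<Rightarrow> nat \<times> nat \<Rightarrow> (nat \<Rightarrow> int) \<Rightarrow> nat \<Rightarrow> nat \<Rightarrow> nat \<times> nat" where
  "grown_cell L a s n 0 = a"
| "grown_cell L a s n (Suc m) = extreme_cell s (Suc n + m) (grown L a s n m)"

primrec grown_filling :: "(nat \<times> nat) set \<Rightarrow> nat \<times> nat \<Rightarrow> (nat \<Rightarrow> int) \<Rightarrow> nat \<Rightarrow> nat \<Rightarrow> tableau" where
  "grown_filling L a s n 0 = (\<lambda>c. if c = a then Suc n else 0)"
| "grown_filling L a s n (Suc m) = (grown_filling L a s n m)(grown_cell L a s n (Suc m) := Suc (Suc (n + m)))"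

lemma addable_extreme_cell: "ferrers D \<Longrightarrow> addable D (extreme_cell s k D)"
  using addable_right_cell addable_top_cell unfolding extreme_cell_def by auto

lemma content_extreme_cell:
  assumes "ferrers D" "c \<in> D"
  shows "s k = 1 \<Longrightarrow> content c < content (extreme_cell s k D)"
    "s k \<noteq> 1 \<Longrightarrow> content (extreme_cell s k D) < content c"
  using addable_right_cell[OF assms(1)] addable_top_cell[OF assms(1)] assms(2)
  unfolding extreme_cell_def by auto

locale growth =
  fixes L :: "(nat \<times> nat) set" and a :: "nat \<times> nat" and s :: "nat \<Rightarrow> int" and n :: nat
  assumes ferrers_L: "ferrers L" and addable_a: "addable L a" and card_L: "card L = n"
begin

abbreviation "diag \<equiv> grown L a s n"
abbreviation "cell \<equiv> grown_cell L a s n"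
abbreviation "fill \<equiv> grown_filling L a s n"

lemma grown_invariant: "ferrers (diag m) \<and> L \<subseteq> diag m \<and> card (diag m) = Suc n + m \<and> cell m \<in> diag m \<and> a \<in> diag m"
proof (induction m)
  case 0
  have "ferrers (insert a L)" using ferrers_insert_addable[OF ferrers_L addable_a] .
  moreover have "card (insert a L) = Suc n" using addable_a card_L ferrers_finite[OF ferrers_L] by (simp add: addable_def)
  ultimately show ?case by auto
next
  case (Suc m)
  have ad: "addable (diag m) (extreme_cell s (Suc n + m) (diag m))" using addable_extreme_cell Suc.IH by blast
  have "ferrers (diag (Suc m))" using ferrers_insert_addable[OF _ ad] Suc.IH by simp
  moreover have "card (diag (Suc m)) = Suc n + Suc m"
    using ad Suc.IH ferrers_finite[of "diag m"] by (simp add: addable_def)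
  ultimately show ?case using Suc.IH by auto
qed

lemma ferrers_diag: "ferrers (diag m)" using grown_invariant by blast
lemma subset_diag: "L \<subseteq> diag m" using grown_invariant by blast
lemma card_diag: "card (diag m) = Suc n + m" using grown_invariant by blast
lemma cell_in_diag: "cell m \<in> diag m" using grown_invariant by blast

lemma addable_cell_Suc: "addable (diag m) (cell (Suc m))"
  using addable_extreme_cell[OF ferrers_diag] by simp

lemma cell_Suc_notin_diag: "cell (Suc m) \<notin> diag m" using addable_cell_Suc by (simp add: addable_def)

lemma diag_mono: "j \<le> m \<Longrightarrow> diag j \<subseteq> diag m"
  by (induction m) (auto simp: le_Suc_eq)

lemma cell_notin_L: "cell j \<notin> L"
proof (cases j)
  case 0
  then show ?thesis using addable_a by (simp add: addable_def)
next
  case (Suc m)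
  then show ?thesis using cell_Suc_notin_diag[of m] subset_diag[of m] by auto
qed

lemma cell_inj: "j < m \<Longrightarrow> cell j \<noteq> cell m"
proof -
  assume "j < m"
  then obtain m' where m: "m = Suc m'" "j \<le> m'" by (cases m) auto
  have "cell j \<in> diag m'" using cell_in_diag[of j] diag_mono[OF m(2)] by auto
  then show ?thesis using cell_Suc_notin_diag[of m'] m by auto
qed

lemma fill_cell: "j \<le> m \<Longrightarrow> fill m (cell j) = Suc n + j"
proof (induction m)
  case 0
  then show ?case by simp
next
  case (Suc m)
  show ?case
  proof (cases "j = Suc m")
    case True
    then show ?thesis by simp
  next
    case False
    then have "j \<le> m" "cell j \<noteq> cell (Suc m)" using Suc.prems cell_inj[of j "Suc m"] by auto
    then show ?thesis using Suc.IH by simp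
  qed
qed

lemma fill_zero: "c \<notin> diag m - L \<Longrightarrow> fill m c = 0"
proof (induction m)
  case 0
  then show ?case using addable_a by (auto simp: addable_def)
next
  case (Suc m)
  then show ?case using cell_notin_L[of "Suc m"] by auto
qed

lemma bij_fill: "bij_betw (fill m) (diag m - L) {Suc n..Suc n + m}"
proof (induction m)
  case 0
  have "insert a L - L = {a}" using addable_a by (auto simp: addable_def)
  then show ?case by (simp add: bij_betw_def)
next
  case (Suc m)
  have e: "diag (Suc m) - L = (diag m - L) \<union> {cell (Suc m)}" using cell_notin_L[of "Suc m"] by auto
  have eqs: "\<And>c. c \<in> diag m - L \<Longrightarrow> fill (Suc m) c = fill m c" using cell_Suc_notin_diag[of m] by auto
  have b1: "bij_betw (fill (Suc m)) (diag m - L) {Suc n..Suc n + m}"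
    using Suc.IH bij_betw_cong[of "diag m - L" "fill (Suc m)" "fill m" "{Suc n..Suc n + m}", OF eqs] by simp
  have X: "bij_betw (fill (Suc m)) ((diag m - L) \<union> {cell (Suc m)}) ({Suc n..Suc n + m} \<union> {fill (Suc m) (cell (Suc m))})"
    using b1 cell_Suc_notin_diag[of m] by (intro notIn_Un_bij_betw) auto
  have se: "{Suc n..Suc n + m} \<union> {fill (Suc m) (cell (Suc m))} = {Suc n..Suc n + Suc m}" by auto
  show ?case by (subst e, subst se[symmetric], rule X)
qed

lemma syt_augment_fill:
  assumes P: "P \<in> syt L" and Lc: "L = cells lam"
  shows "augment lam (fill m) P \<in> syt (diag m)"
proof (induction m)
  case 0
  have eq: "augment lam (fill 0) P = P(a := Suc (card L))"
  proof
    fix c show "augment lam (fill 0) P c = (P(a := Suc (card L))) c"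
      using addable_a sytD(1)[OF P] card_L unfolding augment_def Lc[symmetric] by (auto simp: addable_def)
  qed
  have ex: "P(a := Suc (card L)) \<in> syt (insert a L)" using syt_extend[OF P ferrers_L addable_a] .
  show ?case by (simp only: eq ex grown.simps(1))
next
  case (Suc m)
  have eq: "augment lam (fill (Suc m)) P = (augment lam (fill m) P)(cell (Suc m) := Suc (card (diag m)))"
  proof
    fix c show "augment lam (fill (Suc m)) P c = ((augment lam (fill m) P)(cell (Suc m) := Suc (card (diag m)))) c"
      using cell_notin_L[of "Suc m"] card_diag[of m] unfolding augment_def Lc[symmetric] by auto
  qed
  have ex: "(augment lam (fill m) P)(cell (Suc m) := Suc (card (diag m))) \<in> syt (insert (cell (Suc m)) (diag m))"
    using syt_extend[OF Suc.IH ferrers_diag addable_cell_Suc] .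
  have "insert (cell (Suc m)) (diag m) = diag (Suc m)" by simp
  then show ?case using eq ex by metis
qed

lemma content_cell_Suc:
  "s (Suc n + m) = 1 \<Longrightarrow> content (cell m) < content (cell (Suc m))"
  "s (Suc n + m) \<noteq> 1 \<Longrightarrow> content (cell (Suc m)) < content (cell m)"
  using content_extreme_cell[OF ferrers_diag[of m] cell_in_diag[of m]] by simp_all

end

section \<open>A dual equivalence graph whose restriction is isomorphic to the graph of a shape\<close>

locale restricted_iso =
  fixes V :: "'v set" and \<sigma> :: "'v \<Rightarrow> nat \<Rightarrow> int" and E :: "nat \<Rightarrow> 'v set set"
    and n N :: nat and lam :: "nat list" and \<phi> :: "'v \<Rightarrow> tableau"
  assumes deg: "dual_equivalence_graph n N V \<sigma> E"
    and conn: "connected_graph n V E"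
    and nN: "n < N"
    and part: "is_partition lam" and sz: "sum_list lam = n"
    and iso: "graph_iso n n V (restr_sig n \<sigma>) (restr_edges n E)
                (SYT lam) desc_sig (tab_edges n (SYT lam)) \<phi>"
begin

abbreviation "L \<equiv> cells lam"

lemma ferrers_L: "ferrers L" using ferrers_cells[OF part] .

lemma card_L: "card L = n" using finite_cells_card_cells[of lam] sz by simp

lemma bij_phi: "bij_betw \<phi> V (syt L)" using iso by (simp add: graph_iso_def SYT_eq_syt)

lemma phi_in: "v \<in> V \<Longrightarrow> \<phi> v \<in> syt L"
  using bij_phi by (auto simp: bij_betw_def)

lemma desc_sig_phi: "v \<in> V \<Longrightarrow> 1 \<le> k \<Longrightarrow> k < n \<Longrightarrow> desc_sig (\<phi> v) k = \<sigma> v k"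
  using iso by (simp add: graph_iso_def restr_sig_def)

lemma edges_phi: "1 < i \<Longrightarrow> i < n \<Longrightarrow> image (image \<phi>) (E i) = tab_edges n (syt L) i"
  using iso by (simp add: graph_iso_def restr_edges_def SYT_eq_syt)

lemma finite_V: "finite V"
  using deg by (simp add: dual_equivalence_graph_def signed_colored_graph_def)

lemma sig_pm: "v \<in> V \<Longrightarrow> 1 \<le> k \<Longrightarrow> k < N \<Longrightarrow> \<sigma> v k = 1 \<or> \<sigma> v k = -1"
  using deg by (simp add: dual_equivalence_graph_def signed_colored_graph_def)

lemma edge_pair: "1 < i \<Longrightarrow> i < n \<Longrightarrow> e \<in> E i \<Longrightarrow> \<exists>x\<in>V. \<exists>y\<in>V. x \<noteq> y \<and> e = {x,y}"
  using deg by (simp add: dual_equivalence_graph_def signed_colored_graph_def)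

lemma sig_edge_far:
  "1 < i \<Longrightarrow> i < n \<Longrightarrow> {w,x} \<in> E i \<Longrightarrow> 1 \<le> h \<Longrightarrow> h < N \<Longrightarrow> Suc i < h \<Longrightarrow> \<sigma> w h = \<sigma> x h"
  using deg unfolding dual_equivalence_graph_def deg_ax2_def by blast

lemma sig_edge_next:
  "1 < i \<Longrightarrow> i < n \<Longrightarrow> {w,x} \<in> E i \<Longrightarrow> Suc i < N \<Longrightarrow> \<sigma> w (Suc i) = - \<sigma> x (Suc i)
   \<Longrightarrow> \<sigma> w (Suc i) = - \<sigma> w i"
  using deg unfolding dual_equivalence_graph_def deg_ax3_def by blast

definition vertex_of :: "tableau \<Rightarrow> 'v" where
  "vertex_of = inv_into V \<phi>"

lemma vertex_of_in: "S \<in> syt L \<Longrightarrow> vertex_of S \<in> V \<and> \<phi> (vertex_of S) = S"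
  using bij_phi unfolding vertex_of_def bij_betw_def by (auto intro: inv_into_into f_inv_into_f)

lemma vertex_of_phi: "v \<in> V \<Longrightarrow> vertex_of (\<phi> v) = v"
  using bij_phi unfolding vertex_of_def bij_betw_def by simp

lemma dual_d_edge:
  assumes S: "S \<in> syt L" and i: "1 < i" "i < n" and ne: "dual_d i S \<noteq> S"
  shows "{vertex_of S, vertex_of (dual_d i S)} \<in> E i"
proof -
  have "{S, dual_d i S} \<in> tab_edges n (syt L) i"
    unfolding tab_edges_def using i S ne by auto
  then have "{S, dual_d i S} \<in> image (image \<phi>) (E i)" using edges_phi[OF i] by simp
  then obtain e where e: "e \<in> E i" "\<phi> ` e = {S, dual_d i S}" by auto
  obtain x y where xy: "x \<in> V" "y \<in> V" "e = {x,y}" using edge_pair[OF i e(1)] by blast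
  have "{S, dual_d i S} = {\<phi> x, \<phi> y}" using e(2) xy(3) by simp
  then have "{vertex_of S, vertex_of (dual_d i S)} = {x, y}"
    using vertex_of_phi[OF xy(1)] vertex_of_phi[OF xy(2)] by (auto simp: doubleton_eq_iff)
  then show ?thesis using e(1) xy(3) by simp
qed

lemma sig_n_dual_connected:
  assumes "(S, S') \<in> dual_connected L (n - 1)"
  shows "\<sigma> (vertex_of S) n = \<sigma> (vertex_of S') n"
  using assms
proof (induction rule: rtrancl_induct)
  case (step S' S'')
  obtain S1 S2 i where m: "S1 \<in> syt L" "1 < i" "i < n - 1" "S2 = dual_d i S1"
    and S12: "{S', S''} = {S1, S2}"
    using step.hyps(2) unfolding dual_moves_def by blast
  have "\<sigma> (vertex_of S1) n = \<sigma> (vertex_of S2) n"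
  proof (cases "S2 = S1")
    case False
    then show ?thesis
      using dual_d_edge[OF m(1,2)] m sig_edge_far[of i "vertex_of S1" "vertex_of S2" n] nN by simp
  qed simp
  then show ?case using step.IH S12 by (auto simp: doubleton_eq_iff)
qed simp

end

lemma ex_addable_cut:
  assumes F: "ferrers D" and R: "finite R" "\<And>r. r \<in> R \<Longrightarrow> removable D r" and PR: "P \<subseteq> R"
    and closed: "\<And>p r. p \<in> P \<Longrightarrow> r \<in> R \<Longrightarrow> content r < content p \<Longrightarrow> r \<in> P"
  shows "\<exists>a. addable D a \<and> (\<forall>r\<in>R. r \<in> P \<longleftrightarrow> rd_less r a)"
proof -
  have in_D: "r \<in> D" if "r \<in> R" for r using R(2)[OF that] by (simp add: removable_def)
  consider "P = R" | "P = {}" | "P \<noteq> {}" "R - P \<noteq> {}" using PR by blast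
  then show ?thesis
  proof cases
    case 1
    then show ?thesis using addable_right_cell[OF F] in_D rd_less_if_content_less by blast
  next
    case 2
    have "\<not> rd_less r (top_cell D)" if "r \<in> R" for r
      using addable_top_cell[OF F] in_D[OF that] content_le_if_rd_less by (meson not_le)
    then show ?thesis using addable_top_cell[OF F] 2 by blast
  next
    case 3
    obtain p where p: "p \<in> P" and p_max: "\<And>r. r \<in> P \<Longrightarrow> content r \<le> content p"
      using finite_obtain_arg_max[of P content] 3 finite_subset[OF PR R(1)] by blast
    obtain q where q: "q \<in> R - P" and q_min: "\<And>r. r \<in> R - P \<Longrightarrow> - content r \<le> - content q"
      using finite_obtain_arg_max[of "R - P" "\<lambda>r. - content r"] 3 R(1) by blast
    have "content p \<noteq> content q"
      using removable_content_inj[OF F R(2) R(2), of p q] p q PR by blast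
    then have "content p < content q" using closed[OF p, of q] q by fastforce
    then obtain a where a: "addable D a" "content p < content a" "content a < content q"
      using ex_addable_between_removables[OF F R(2) R(2)] p q PR by blast
    have "r \<in> P \<longleftrightarrow> rd_less r a" if "r \<in> R" for r
    proof (cases "r \<in> P")
      case True
      then have "content r < content a" using p_max[OF True] a(2) by linarith
      then show ?thesis using True rd_less_if_content_less by simp
    next
      case False
      then show ?thesis using q_min[of r] that a(3) content_le_if_rd_less by fastforce
    qed
    then show ?thesis using a(1) by blast
  qed
qed

context restricted_iso
begin

abbreviation corner :: "'v \<Rightarrow> nat \<times> nat" where
  "corner v \<equiv> cell_of (\<phi> v) n"

lemma corner_spec:
  assumes v: "v \<in> V" and n1: "1 \<le> n"
  shows "corner v \<in> L \<and> \<phi> v (corner v) = n \<and> removable L (corner v)"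
  using cell_of_syt_in[OF phi_in[OF v] n1] removable_syt_max[OF phi_in[OF v]] card_L by simp

lemma entry_above_pred_iff_corner:
  assumes v: "v \<in> V" and n1: "1 \<le> n"
  shows "n - 1 < \<phi> v c \<longleftrightarrow> c = corner v"
proof
  assume c: "n - 1 < \<phi> v c"
  then have "c \<in> L" using syt_nonzero_in[OF phi_in[OF v]] by simp
  then have "\<phi> v c = n" using c syt_range[OF phi_in[OF v]] card_L by fastforce
  then show "c = corner v" using cell_of_syt[OF phi_in[OF v], of c n] n1 by simp
qed (use corner_spec[OF v n1] n1 in simp)

lemma sig_n_eq_if_same_corner:
  assumes v: "v \<in> V" and w: "w \<in> V" and n1: "1 \<le> n" and e: "corner v = corner w"
  shows "\<sigma> v n = \<sigma> w n"
proof -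
  have "agree_above (n - 1) (\<phi> v) (\<phi> w)"
    unfolding agree_above_def
    using entry_above_pred_iff_corner[OF v n1] entry_above_pred_iff_corner[OF w n1] corner_spec[OF v n1]
      corner_spec[OF w n1] e by metis
  then have "(\<phi> v, \<phi> w) \<in> dual_connected L (n - 1)"
    using dual_connected_if_agree_above[OF ferrers_L _ phi_in[OF v] phi_in[OF w]] card_L by simp
  then show ?thesis using sig_n_dual_connected vertex_of_phi v w by metis
qed

text \<open>Moving the corner holding n to the right cannot turn a descent at n into an ascent:
otherwise the edge d_{n-1} exchanging the two corners would violate axiom 3.\<close>

lemma sig_n_descent_propagates:
  assumes v1: "v1 \<in> V" and v2: "v2 \<in> V" and n1: "1 \<le> n"
    and c: "content (corner v1) < content (corner v2)" and s1: "\<sigma> v1 n = -1"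
  shows "\<sigma> v2 n = -1"
proof (rule ccontr)
  assume "\<sigma> v2 n \<noteq> -1"
  then have s2: "\<sigma> v2 n = 1" using sig_pm[OF v2 n1 nN] by simp
  define r1 where "r1 = corner v1"
  define r2 where "r2 = corner v2"
  have T: "\<phi> v2 \<in> syt L" using phi_in[OF v2] .
  have "{c \<in> L. \<phi> v2 c \<le> Suc (n - 1)} = L" using syt_range[OF T] card_L n1 by auto
  then have rem: "removable {c \<in> L. \<phi> v2 c \<le> Suc (n - 1)} r1" "removable {c \<in> L. \<phi> v2 c \<le> Suc (n - 1)} r2"
    using corner_spec[OF v1 n1] corner_spec[OF v2 n1] r1_def r2_def by simp_all
  have ne: "r2 \<noteq> r1" using c r1_def r2_def by auto
  have k: "Suc (n - 1) \<le> card L" using card_L n1 by simp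
  obtain S S' where S: "S \<in> syt L" "S' \<in> syt L" "dual_d (n - 1) S = S'"
      "S r2 = Suc (n - 1)" "S r1 = n - 1" "S' r1 = Suc (n - 1)" "2 \<le> n - 1"
    by (rule ex_dual_d_exchanging_corners[OF T ferrers_L k rem(2) rem(1) ne])
  have Sn: "S r2 = n" "S' r1 = n" using S(4,6) n1 by simp_all
  have vS: "vertex_of S \<in> V" "\<phi> (vertex_of S) = S" using vertex_of_in[OF S(1)] by auto
  have vS': "vertex_of S' \<in> V" "\<phi> (vertex_of S') = S'" using vertex_of_in[OF S(2)] by auto
  have "corner (vertex_of S) = corner v2" "corner (vertex_of S') = corner v1"
    using vS(2) vS'(2) cell_of_syt[OF S(1) Sn(1)] cell_of_syt[OF S(2) Sn(2)] n1 r1_def r2_def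
    by simp_all
  then have sw: "\<sigma> (vertex_of S) n = 1" and sx: "\<sigma> (vertex_of S') n = -1"
    using sig_n_eq_if_same_corner[OF vS(1) v2 n1] sig_n_eq_if_same_corner[OF vS'(1) v1 n1] s1 s2
    by simp_all
  have "S \<noteq> S'" using S(5,6) n1 by auto
  then have "{vertex_of S, vertex_of S'} \<in> E (n - 1)" using dual_d_edge[OF S(1), of "n - 1"] S(3,7) by simp
  then have "\<sigma> (vertex_of S) (n - 1) = -1"
    using sig_edge_next[of "n - 1" "vertex_of S" "vertex_of S'"] S(7) nN sw sx by simp
  moreover have "desc_sig S (n - 1) = \<sigma> (vertex_of S) (n - 1)"
    using desc_sig_phi[of "vertex_of S" "n - 1"] vertex_of_in[OF S(1)] S(7) by simp
  moreover have "cell_of S (n - 1) = r1" "cell_of S n = r2"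
    using cell_of_syt[OF S(1) S(5)] cell_of_syt[OF S(1) S(4)] S(7) by simp_all
  moreover have "rd_less r1 r2" using c r1_def r2_def rd_less_if_content_less by simp
  ultimately show False unfolding desc_sig_def rlt_def using n1 by simp
qed

lemma ex_addable_sig_n:
  assumes n1: "1 \<le> n"
  shows "\<exists>a. addable L a \<and> (\<forall>v\<in>V. \<sigma> v n = (if rd_less (corner v) a then 1 else -1))"
proof -
  define P where "P = {r \<in> corner ` V. \<exists>v\<in>V. corner v = r \<and> \<sigma> v n = 1}"
  have key: "\<sigma> v n = 1 \<longleftrightarrow> corner v \<in> P" if v: "v \<in> V" for v
  proof
    assume "corner v \<in> P"
    then obtain w where "w \<in> V" "corner w = corner v" "\<sigma> w n = 1" unfolding P_def by blast
    then show "\<sigma> v n = 1" using sig_n_eq_if_same_corner[OF _ v n1] by metis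
  qed (use v P_def in blast)
  have "\<exists>a. addable L a \<and> (\<forall>r\<in>corner ` V. r \<in> P \<longleftrightarrow> rd_less r a)"
  proof (rule ex_addable_cut[OF ferrers_L])
    fix p r assume p: "p \<in> P" and r: "r \<in> corner ` V" and less: "content r < content p"
    obtain w where w: "w \<in> V" "corner w = p" "\<sigma> w n = 1" using p P_def by blast
    obtain v where v: "v \<in> V" "corner v = r" using r by blast
    have "\<sigma> v n = 1"
      using sig_n_descent_propagates[OF v(1) w(1) n1] sig_pm[OF v(1) n1 nN] less v w by force
    then show "r \<in> P" using key[OF v(1)] v by simp
  next
    show "finite (corner ` V)" using finite_V by simp
  next
    show "removable L r" if "r \<in> corner ` V" for r using that corner_spec[OF _ n1] by blast
  next
    show "P \<subseteq> corner ` V" using P_def by blast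
  qed
  then obtain a where a: "addable L a" "\<forall>r\<in>corner ` V. r \<in> P \<longleftrightarrow> rd_less r a" by blast
  have "\<sigma> v n = (if rd_less (corner v) a then 1 else -1)" if "v \<in> V" for v
    using a(2) key[OF that] sig_pm[OF that n1 nN] that by auto
  then show ?thesis using a(1) by blast
qed

end

context restricted_iso
begin

definition next_cell :: "nat \<times> nat" where
  "next_cell = (SOME a. addable L a \<and> (1 \<le> n \<longrightarrow> (\<forall>v\<in>V. \<sigma> v n = (if rd_less (corner v) a then 1 else -1))))"

lemma next_cell_spec: "addable L next_cell \<and> (1 \<le> n \<longrightarrow> (\<forall>v\<in>V. \<sigma> v n = (if rd_less (corner v) next_cell then 1 else -1)))"
proof -
  have "\<exists>a. addable L a \<and> (1 \<le> n \<longrightarrow> (\<forall>v\<in>V. \<sigma> v n = (if rd_less (corner v) a then 1 else -1)))"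
  proof (cases "1 \<le> n")
    case True then show ?thesis using ex_addable_sig_n by blast
  next
    case False
    then have "card L = 0" using card_L by simp
    then have "L = {}" using ferrers_finite[OF ferrers_L] by simp
    then have "addable L (1,1)" by (simp add: addable_def)
    then show ?thesis using False by blast
  qed
  then show ?thesis unfolding next_cell_def by (rule someI_ex)
qed

definition tail_sig :: "nat \<Rightarrow> int" where "tail_sig k = \<sigma> (SOME v. v \<in> V) k"

lemma sig_tail:
  assumes v: "v \<in> V" and k: "Suc n \<le> k" "k < N"
  shows "\<sigma> v k = tail_sig k"
proof -
  define v0 where "v0 = (SOME v. v \<in> V)"
  have "V \<noteq> {}" using bij_phi syt_nonempty[OF ferrers_L] by (auto simp: bij_betw_def)
  then have v0: "v0 \<in> V" using v0_def by (simp add: some_in_eq)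
  have "(v0, v) \<in> (edge_rel (all_edges n E))\<^sup>*" using conn v0 v by (simp add: connected_graph_def)
  then have "\<sigma> v0 k = \<sigma> v k"
  proof (induction rule: rtrancl_induct)
    case base then show ?case by simp
  next
    case (step y z)
    then obtain j where j: "1 < j" "j < n" "{y,z} \<in> E j"
      unfolding edge_rel_def all_edges_def by auto
    then have "\<sigma> y k = \<sigma> z k" using sig_edge_far[OF j(1,2,3), of k] k by simp
    then show ?case using step.IH by simp
  qed
  then show ?thesis using v0_def tail_sig_def by simp
qed

end

sublocale restricted_iso \<subseteq> G: growth "cells lam" next_cell tail_sig n
  using ferrers_L next_cell_spec card_L by unfold_locales simp_all

context restricted_iso
begin

abbreviation "M \<equiv> N - Suc n"
abbreviation "rho_cells \<equiv> G.diag M"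
abbreviation "filling \<equiv> G.fill M"
abbreviation "aug \<equiv> augment lam filling"

lemma card_rho_cells: "card rho_cells = N" using G.card_diag nN by simp
lemma ferrers_rho_cells: "ferrers rho_cells" using G.ferrers_diag .
lemma L_subset_rho_cells: "L \<subseteq> rho_cells" using G.subset_diag .

lemma syt_aug: "P \<in> syt L \<Longrightarrow> aug P \<in> syt rho_cells"
  using G.syt_augment_fill by simp

lemma bij_filling: "bij_betw filling (rho_cells - L) {Suc n..N}"
  using G.bij_fill[of M] nN by simp

lemma filling_zero: "c \<notin> rho_cells - L \<Longrightarrow> filling c = 0"
  using G.fill_zero by simp

lemma filling_values: "c \<notin> L \<Longrightarrow> filling c = 0 \<or> Suc n \<le> filling c"
proof -
  assume c: "c \<notin> L"
  show ?thesis
  proof (cases "c \<in> rho_cells")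
    case True
    then have "filling c \<in> {Suc n..N}" using bij_filling c by (auto simp: bij_betw_def)
    then show ?thesis by simp
  next
    case False then show ?thesis using filling_zero by simp
  qed
qed

lemma cell_of_aug_low:
  assumes P: "P \<in> syt L" and j: "1 \<le> j" "j \<le> n"
  shows "cell_of (aug P) j = cell_of P j"
proof -
  have c: "cell_of P j \<in> L \<and> P (cell_of P j) = j" using cell_of_syt_in[OF P j(1)] j card_L by simp
  then have "aug P (cell_of P j) = j" by (simp add: augment_def)
  then show ?thesis using cell_of_syt[OF syt_aug[OF P] _ j(1)] by simp
qed

lemma cell_of_aug_high:
  assumes P: "P \<in> syt L" and j: "j \<le> M"
  shows "cell_of (aug P) (Suc n + j) = G.cell j"
proof -
  have "G.cell j \<notin> L" using G.cell_notin_L .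
  then have "aug P (G.cell j) = Suc n + j" using G.fill_cell[OF j] by (simp add: augment_def)
  then show ?thesis using cell_of_syt[OF syt_aug[OF P], of "G.cell j" "Suc n + j"] by simp
qed

lemma swap_entries_aug:
  assumes x: "1 \<le> x" "x \<le> n" and y: "1 \<le> y" "y \<le> n"
  shows "swap_entries (aug P) x y = aug (swap_entries P x y)"
proof
  fix c
  show "swap_entries (aug P) x y c = aug (swap_entries P x y) c"
  proof (cases "c \<in> L")
    case True then show ?thesis by (simp add: swap_entries_def augment_def)
  next
    case False
    then have "filling c \<noteq> x" "filling c \<noteq> y" using filling_values[OF False] x y by auto
    then show ?thesis using False by (simp add: swap_entries_def augment_def)
  qed
qed

lemma dual_d_aug:
  assumes P: "P \<in> syt L" and i: "1 < i" "i < n"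
  shows "dual_d i (aug P) = aug (dual_d i P)"
proof -
  have c1: "cell_of (aug P) (i - 1) = cell_of P (i - 1)" using cell_of_aug_low[OF P] i by simp
  have c2: "cell_of (aug P) i = cell_of P i" using cell_of_aug_low[OF P] i by simp
  have c3: "cell_of (aug P) (Suc i) = cell_of P (Suc i)" using cell_of_aug_low[OF P] i by simp
  have s1: "swap_entries (aug P) i (Suc i) = aug (swap_entries P i (Suc i))" using swap_entries_aug i by simp
  have s2: "swap_entries (aug P) i (i - 1) = aug (swap_entries P i (i - 1))" using swap_entries_aug i by simp
  show ?thesis unfolding dual_d_def rlt_def c1 c2 c3 s1 s2 by (simp only: if_distrib[where f = "augment lam filling"])
qed

lemma dual_d_cases: "dual_d i P \<in> {P, swap_entries P i (Suc i), swap_entries P i (i - 1)}"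
  unfolding dual_d_def by simp

lemma dual_d_zero: "P \<in> syt L \<Longrightarrow> 1 < i \<Longrightarrow> c \<notin> L \<Longrightarrow> dual_d i P c = 0"
proof -
  assume a: "P \<in> syt L" "1 < i" "c \<notin> L"
  then have z: "P c = 0" using sytD(1) by blast
  then have "swap_entries P i (Suc i) c = 0" "swap_entries P i (i - 1) c = 0"
    using a(2) by (simp_all add: swap_entries_def)
  then show ?thesis using dual_d_cases[of i P] z by auto
qed

lemma aug_inj: "(\<forall>c. c \<notin> L \<longrightarrow> P c = 0) \<Longrightarrow> (\<forall>c. c \<notin> L \<longrightarrow> Q c = 0) \<Longrightarrow> aug P = aug Q \<Longrightarrow> P = Q"
proof
  fix c assume h: "\<forall>c. c \<notin> L \<longrightarrow> P c = 0" "\<forall>c. c \<notin> L \<longrightarrow> Q c = 0" "aug P = aug Q"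
  show "P c = Q c"
  proof (cases "c \<in> L")
    case True
    then show ?thesis using fun_cong[OF h(3), of c] by (simp add: augment_def)
  next
    case False then show ?thesis using h(1)[rule_format, of c] h(2)[rule_format, of c] by simp
  qed
qed

lemma inj_on_aug: "inj_on aug (syt L)"
proof (rule inj_onI)
  fix P Q assume h: "P \<in> syt L" "Q \<in> syt L" "aug P = aug Q"
  have "\<forall>c. c \<notin> L \<longrightarrow> P c = 0" "\<forall>c. c \<notin> L \<longrightarrow> Q c = 0" using sytD(1) h(1,2) by blast+
  then show "P = Q" using aug_inj h(3) by blast
qed

lemma ASYT_eq_aug_image:
  assumes rho: "cells rho = rho_cells"
  shows "ASYT lam rho filling = aug ` syt L"
proof
  show "aug ` syt L \<subseteq> ASYT lam rho filling"
  proof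
    fix T assume "T \<in> aug ` syt L"
    then obtain P where P: "P \<in> syt L" "T = aug P" by auto
    have "T \<in> SYT rho" using syt_aug[OF P(1)] P(2) rho SYT_eq_syt[of rho] by simp
    moreover have "\<forall>c \<in> cells rho - cells lam. T c = filling c" using P(2) by (simp add: augment_def)
    ultimately show "T \<in> ASYT lam rho filling" by (simp add: ASYT_def)
  qed
next
  show "ASYT lam rho filling \<subseteq> aug ` syt L"
  proof
    fix T assume "T \<in> ASYT lam rho filling"
    then have T: "T \<in> syt rho_cells" and TA: "\<forall>c \<in> rho_cells - L. T c = filling c"
      using rho SYT_eq_syt[of rho] by (auto simp: ASYT_def)
    define P where "P = override_on (\<lambda>_. 0) T L"
    have "T ` (rho_cells - L) = filling ` (rho_cells - L)" using TA by (auto simp: image_def)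
    also have "\<dots> = {Suc n..card rho_cells}" using bij_filling card_rho_cells by (simp add: bij_betw_def)
    finally have img: "T ` (rho_cells - L) = {Suc (card L)..card rho_cells}" using card_L by simp
    have P: "P \<in> syt L" unfolding P_def
      by (rule syt_restrict[OF T L_subset_rho_cells ferrers_finite[OF ferrers_rho_cells] img])
    have "aug P = T"
    proof
      fix c show "aug P c = T c"
      proof (cases "c \<in> L")
        case True then show ?thesis by (simp add: augment_def P_def override_on_def)
      next
        case False
        show ?thesis
        proof (cases "c \<in> rho_cells")
          case True then show ?thesis using False TA by (simp add: augment_def)
        next
          case False
          then show ?thesis using filling_zero sytD(1)[OF T] \<open>c \<notin> L\<close> by (simp add: augment_def)
        qed
      qed
    qed
    then show "T \<in> aug ` syt L" using P by blast
  qed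
qed

lemma desc_sig_aug:
  assumes v: "v \<in> V" and k: "1 \<le> k" "k < N"
  shows "desc_sig (aug (\<phi> v)) k = \<sigma> v k"
proof -
  have P: "\<phi> v \<in> syt L" using phi_in[OF v] .
  consider "k < n" | "k = n" | "n < k" by linarith
  then show ?thesis
  proof cases
    case 1
    have "cell_of (aug (\<phi> v)) k = cell_of (\<phi> v) k" "cell_of (aug (\<phi> v)) (Suc k) = cell_of (\<phi> v) (Suc k)"
      using cell_of_aug_low[OF P] k 1 by auto
    then have "desc_sig (aug (\<phi> v)) k = desc_sig (\<phi> v) k" by (simp add: desc_sig_def rlt_def)
    then show ?thesis using desc_sig_phi[OF v k(1) 1] by simp
  next
    case 2
    have "cell_of (aug (\<phi> v)) n = corner v" using cell_of_aug_low[OF P] k 2 by auto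
    moreover have "cell_of (aug (\<phi> v)) (Suc n + 0) = G.cell 0" using cell_of_aug_high[OF P, of 0] by simp
    ultimately have "desc_sig (aug (\<phi> v)) n = (if rd_less (corner v) next_cell then 1 else -1)"
      by (simp add: desc_sig_def rlt_def)
    then show ?thesis using next_cell_spec v 2 k by simp
  next
    case 3
    define j where "j = k - Suc n"
    have kj: "k = Suc n + j" "Suc k = Suc n + Suc j" using 3 j_def by auto
    have jM: "Suc j \<le> M" using k kj by simp
    have c1: "cell_of (aug (\<phi> v)) k = G.cell j" using cell_of_aug_high[OF P, of j] jM kj by simp
    have c2: "cell_of (aug (\<phi> v)) (Suc k) = G.cell (Suc j)" using cell_of_aug_high[OF P, of "Suc j"] jM kj by simp
    have sv: "\<sigma> v k = tail_sig k" using sig_tail[OF v _ k(2)] 3 by simp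
    show ?thesis
    proof (cases "tail_sig k = 1")
      case True
      then have "content (G.cell j) < content (G.cell (Suc j))" using G.content_cell_Suc(1)[of j] kj by simp
      then have "rd_less (G.cell j) (G.cell (Suc j))" using rd_less_if_content_less by simp
      then show ?thesis using c1 c2 sv True by (simp add: desc_sig_def rlt_def)
    next
      case False
      then have "content (G.cell (Suc j)) < content (G.cell j)" using G.content_cell_Suc(2)[of j] kj by simp
      then have "\<not> rd_less (G.cell j) (G.cell (Suc j))" using content_le_if_rd_less by fastforce
      moreover have "\<sigma> v k = -1" using sig_pm[OF v k] sv False by auto
      ultimately show ?thesis using c1 c2 by (simp add: desc_sig_def rlt_def)
    qed
  qed
qed

lemma dual_d_aug_moves_iff:
  assumes P: "P \<in> syt L" and i: "1 < i" "i < n"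
  shows "dual_d i (aug P) \<noteq> aug P \<longleftrightarrow> dual_d i P \<noteq> P"
proof -
  have "\<forall>c. c \<notin> L \<longrightarrow> dual_d i P c = 0" using dual_d_zero[OF P i(1)] by blast
  moreover have "\<forall>c. c \<notin> L \<longrightarrow> P c = 0" using sytD(1)[OF P] by blast
  ultimately show ?thesis using aug_inj dual_d_aug[OF P i] by metis
qed

lemma tab_edges_aug:
  assumes rho: "cells rho = rho_cells" and i: "1 < i" "i < n"
  shows "image (image (\<lambda>v. aug (\<phi> v))) (E i) = tab_edges n (ASYT lam rho filling) i"
proof -
  have "image (image (\<lambda>v. aug (\<phi> v))) (E i) = image (image aug) (image (image \<phi>) (E i))"
    by (auto simp: image_image)
  also have "\<dots> = image (image aug) (tab_edges n (syt L) i)" using edges_phi[OF i] by simp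
  also have "\<dots> = tab_edges n (ASYT lam rho filling) i"
  proof
    show "image (image aug) (tab_edges n (syt L) i) \<subseteq> tab_edges n (ASYT lam rho filling) i"
    proof
      fix x assume "x \<in> image (image aug) (tab_edges n (syt L) i)"
      then obtain P where P: "P \<in> syt L" "dual_d i P \<noteq> P" "x = aug ` {P, dual_d i P}"
        unfolding tab_edges_def using i by auto
      then have "x = {aug P, dual_d i (aug P)}" "dual_d i (aug P) \<noteq> aug P"
        using dual_d_aug[OF P(1) i] dual_d_aug_moves_iff[OF P(1) i] by simp_all
      moreover have "aug P \<in> ASYT lam rho filling" using ASYT_eq_aug_image[OF rho] P(1) by blast
      ultimately show "x \<in> tab_edges n (ASYT lam rho filling) i" unfolding tab_edges_def using i by auto
    qed
  next
    show "tab_edges n (ASYT lam rho filling) i \<subseteq> image (image aug) (tab_edges n (syt L) i)"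
    proof
      fix x assume "x \<in> tab_edges n (ASYT lam rho filling) i"
      then obtain T where T: "T \<in> ASYT lam rho filling" "dual_d i T \<noteq> T" "x = {T, dual_d i T}"
        unfolding tab_edges_def using i by auto
      obtain P where P: "P \<in> syt L" "T = aug P" using T(1) ASYT_eq_aug_image[OF rho] by auto
      then have "dual_d i P \<noteq> P" "x = aug ` {P, dual_d i P}"
        using T(2,3) dual_d_aug[OF P(1) i] dual_d_aug_moves_iff[OF P(1) i] by simp_all
      moreover from this(1) have "{P, dual_d i P} \<in> tab_edges n (syt L) i"
        unfolding tab_edges_def using i P(1) by auto
      ultimately show "x \<in> image (image aug) (tab_edges n (syt L) i)" by blast
    qed
  qed
  finally show ?thesis .
qed

lemma graph_iso_aug:
  assumes rho: "cells rho = rho_cells"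
  shows "graph_iso n N V \<sigma> E (ASYT lam rho filling) desc_sig (tab_edges n (ASYT lam rho filling)) (\<lambda>v. aug (\<phi> v))"
proof -
  have b: "bij_betw aug (syt L) (aug ` syt L)" using inj_on_imp_bij_betw[OF inj_on_aug] .
  have "bij_betw (aug \<circ> \<phi>) V (aug ` syt L)" using bij_betw_trans[OF bij_phi b] .
  then have bb: "bij_betw (\<lambda>v. aug (\<phi> v)) V (ASYT lam rho filling)" using ASYT_eq_aug_image[OF rho] by (simp add: comp_def)
  show ?thesis unfolding graph_iso_def using bb desc_sig_aug tab_edges_aug[OF rho] by blast
qed

end

lemma addable_least_outside:
  assumes F: "ferrers D" and T: "T \<in> syt D" and c: "c \<in> D - L" "T c = k"
    and least: "\<And>d. d \<in> D - L \<Longrightarrow> k \<le> T d"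
  shows "addable L c"
proof -
  obtain x y where xy: "c = (x,y)" by fastforce
  have pos: "1 \<le> x" "1 \<le> y" using ferrers_pos[OF F] c xy by auto
  have "(x - 1, y) \<in> L" if "2 \<le> x"
  proof -
    have "(x - 1, y) \<in> D" using ferrersD[OF F, of x y "x - 1" y] c xy pos that by simp
    moreover have "T (x - 1, y) < k" using sytD(3)[OF T, of "x - 1" y] calculation c xy that by simp
    ultimately show ?thesis using least by fastforce
  qed
  moreover have "(x, y - 1) \<in> L" if "2 \<le> y"
  proof -
    have "(x, y - 1) \<in> D" using ferrersD[OF F, of x y x "y - 1"] c xy pos that by simp
    moreover have "T (x, y - 1) < k" using sytD(4)[OF T, of x "y - 1"] calculation c xy that by simp
    ultimately show ?thesis using least by fastforce
  qed
  ultimately show ?thesis using c xy pos by (simp add: addable_def)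
qed

lemma ex_syt_max_at:
  assumes F: "ferrers D" and r: "removable D r"
  shows "\<exists>T\<in>syt D. T r = card D"
proof -
  obtain Q where "Q \<in> syt (D - {r})" using syt_nonempty[OF ferrers_Diff_removable[OF F r]] by blast
  then have "Q(r := card D) \<in> syt D" by (rule syt_extend_removable[OF F r])
  then show ?thesis by (intro bexI[of _ "Q(r := card D)"]) simp_all
qed

context restricted_iso
begin

lemma addable_eq_if_same_separation:
  assumes n1: "1 \<le> n" and a: "addable L a" and b: "addable L b"
    and sep: "\<And>v. v \<in> V \<Longrightarrow> rd_less (corner v) a \<longleftrightarrow> rd_less (corner v) b"
  shows "a = b"
proof (rule ccontr)
  assume "a \<noteq> b"
  then obtain r where r: "removable L r"
    and btw: "(content a < content r \<and> content r < content b) \<or> (content b < content r \<and> content r < content a)"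
    using ex_removable_between_addables[OF ferrers_L, of "fst a" "snd a" "fst b" "snd b"]
      ex_removable_between_addables[OF ferrers_L, of "fst b" "snd b" "fst a" "snd a"] a b
    by (cases "content a \<le> content b") auto
  obtain T where T: "T \<in> syt L" "T r = n" using ex_syt_max_at[OF ferrers_L r] card_L by blast
  have "corner (vertex_of T) = r" using vertex_of_in[OF T(1)] cell_of_syt[OF T] n1 by simp
  then have "rd_less r a \<longleftrightarrow> rd_less r b" using sep vertex_of_in[OF T(1)] by metis
  then show False
    using btw rd_less_if_content_less content_le_if_rd_less by (meson not_le)
qed

lemma sig_n_separated_by_Suc_n_cell:
  assumes n1: "1 \<le> n" and c: "c \<notin> L" "A c = Suc n"
    and gi: "graph_iso n N V \<sigma> E (ASYT lam rho A) desc_sig (tab_edges n (ASYT lam rho A))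
               (\<lambda>v. augment lam A (\<phi> v))"
    and v: "v \<in> V"
  shows "\<sigma> v n = (if rd_less (corner v) c then 1 else -1)"
proof -
  let ?T = "augment lam A (\<phi> v)"
  have "?T \<in> ASYT lam rho A" using gi v by (auto simp: graph_iso_def bij_betw_def)
  then have T: "?T \<in> syt (cells rho)" by (simp add: ASYT_def SYT_eq_syt)
  have "cell_of ?T n = corner v"
    using cell_of_syt[OF T, of "corner v" n] corner_spec[OF v n1] n1 by (simp add: augment_def)
  moreover have "cell_of ?T (Suc n) = c" using cell_of_syt[OF T, of c "Suc n"] c by (simp add: augment_def)
  moreover have "desc_sig ?T n = \<sigma> v n" using gi v n1 nN by (simp add: graph_iso_def)
  ultimately show ?thesis by (simp add: desc_sig_def rlt_def)
qed

lemma filling_next_cell: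
  assumes rho: "is_partition rho" and filling: "is_filling lam rho n N A"
    and ne: "ASYT lam rho A \<noteq> {}"
    and gi: "graph_iso n N V \<sigma> E (ASYT lam rho A) desc_sig (tab_edges n (ASYT lam rho A))
               (\<lambda>v. augment lam A (\<phi> v))"
  shows "A next_cell = Suc n"
proof -
  have bijA: "bij_betw A (cells rho - L) {Suc n..N}" using filling by (simp add: is_filling_def)
  moreover have "Suc n \<in> {Suc n..N}" using nN by simp
  ultimately obtain c where c: "c \<in> cells rho - L" "A c = Suc n"
    unfolding bij_betw_def by (metis imageE)
  obtain T where T: "T \<in> ASYT lam rho A" using ne by blast
  then have "T \<in> syt (cells rho)" "\<forall>d \<in> cells rho - L. T d = A d"
    by (simp_all add: ASYT_def SYT_eq_syt)
  moreover have "Suc n \<le> A d" if "d \<in> cells rho - L" for d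
    using bijA that unfolding bij_betw_def by auto
  ultimately have ac: "addable L c"
    using addable_least_outside[OF ferrers_cells[OF rho], of T c L "Suc n"] c by simp
  have "c = next_cell"
  proof (cases "n = 0")
    case True
    then have "L = {}" using card_L ferrers_finite[OF ferrers_L] by simp
    then show ?thesis using ac next_cell_spec addable_empty by metis
  next
    case False
    then have n1: "1 \<le> n" by simp
    show ?thesis
    proof (rule addable_eq_if_same_separation[OF n1 ac])
      show "addable L next_cell" using next_cell_spec by simp
      fix v assume v: "v \<in> V"
      have "(if rd_less (corner v) c then 1 else -1) = (if rd_less (corner v) next_cell then 1 else (-1::int))"
        using sig_n_separated_by_Suc_n_cell[OF n1 _ c(2) gi v] next_cell_spec n1 c v by simp
      then show "rd_less (corner v) c \<longleftrightarrow> rd_less (corner v) next_cell" by (simp split: if_splits)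
    qed
  qed
  then show ?thesis using c by simp
qed

end

theorem lemma3p8:
  fixes V :: "'v set" and \<sigma> :: "'v \<Rightarrow> nat \<Rightarrow> int" and E :: "nat \<Rightarrow> 'v set set"
    and n N :: nat and lam :: "nat list" and \<phi> :: "'v \<Rightarrow> tableau"
  assumes deg: "dual_equivalence_graph n N V \<sigma> E"
    and conn: "connected_graph n V E"
    and nN: "n < N"
    and lam: "is_partition lam" "sum_list lam = n"
    and iso: "graph_iso n n V (restr_sig n \<sigma>) (restr_edges n E)
                (SYT lam) desc_sig (tab_edges n (SYT lam)) \<phi>"
  shows "(\<exists>rho A. is_partition rho \<and> sum_list rho = N \<and> cells lam \<subseteq> cells rho
            \<and> is_filling lam rho n N A \<and> ASYT lam rho A \<noteq> {}
            \<and> graph_iso n N V \<sigma> E (ASYT lam rho A) desc_sig (tab_edges n (ASYT lam rho A))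
                 (\<lambda>v. augment lam A (\<phi> v)))
       \<and> (\<exists>c. \<forall>rho A. is_partition rho \<and> sum_list rho = N \<and> cells lam \<subseteq> cells rho
            \<and> is_filling lam rho n N A \<and> ASYT lam rho A \<noteq> {}
            \<and> graph_iso n N V \<sigma> E (ASYT lam rho A) desc_sig (tab_edges n (ASYT lam rho A))
                 (\<lambda>v. augment lam A (\<phi> v))
            \<longrightarrow> A c = Suc n)"
proof -
  interpret restricted_iso V \<sigma> E n N lam \<phi>
    using deg conn nN lam iso by unfold_locales
  obtain rho where rho: "is_partition rho" "cells rho = rho_cells"
    using ferrers_eq_cells_partition[OF ferrers_rho_cells] by blast
  have "sum_list rho = N" using finite_cells_card_cells[of rho] rho(2) card_rho_cells by simp
  moreover have "cells lam \<subseteq> cells rho" using L_subset_rho_cells rho(2) by simp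
  moreover have "is_filling lam rho n N filling"
    unfolding is_filling_def using filling_zero bij_filling rho(2) by simp
  moreover have "ASYT lam rho filling \<noteq> {}"
    using ASYT_eq_aug_image[OF rho(2)] syt_nonempty[OF ferrers_L] by simp
  ultimately have existence: "\<exists>rho A. is_partition rho \<and> sum_list rho = N \<and> cells lam \<subseteq> cells rho
            \<and> is_filling lam rho n N A \<and> ASYT lam rho A \<noteq> {}
            \<and> graph_iso n N V \<sigma> E (ASYT lam rho A) desc_sig (tab_edges n (ASYT lam rho A))
                 (\<lambda>v. augment lam A (\<phi> v))"
    using rho(1) graph_iso_aug[OF rho(2)] by blast
  show ?thesis using existence filling_next_cell by blast
qed

end
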